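(* Let $\mathcal{G}$ be a GBS graph of groups and $w=a_0^{k_0}y_1a_1^{k_1}\cdots y_na_n^{k_n}$ a $\mathcal{G}$-factorization. Let $1\le i_1<\dots<i_j\le n$ be indices such that $[i_1]\cdots[i_j]\in\Sigma_w^*$ is freely reduced and $\mathcal{C}(w)=[1]\cdots[n]=[i_1]\cdots[i_j]$ in $F_{\Lambda_w}$. Then the $\mathcal{G}$-factorization $$\hat w=a_0^{k_{0,i_1-1}}\,y_{i_1}\,a_{i_1}^{k_{i_1,i_2-1}}\cdots y_{i_j}\,a_{i_j}^{k_{i_j,n}}$$ is Britton-reduced and $w=\hat w$ in $F(\mathcal{G})$.
   Context: $\mathcal{G}$: finite connected graph $Y$ (vertices $V(Y)$, edges $E(Y)$, maps $\iota,\tau$, fixed-point-free involution $y\mapsto\bar y$ with $\iota(\bar y)=\tau(y)$) and integers $\alpha_y,\beta_y\ne0$ with $\alpha_y=\beta_{\bar y}$; $F(\mathcal{G})$ has generators $V(Y)\cup E(Y)$ and relations $\bar yy=1$, $y\,b^{\beta_y}\bar y=a^{\alpha_y}$ ($a=\iota(y)$, $b=\tau(y)$). A $\mathcal{G}$-factorization is a word $a_0^{k_0}y_1a_1^{k_1}\cdots y_na_n^{k_n}$ with $\iota(y_i)=a_{i-1}$, $\tau(y_i)=a_i$, $a_n=a_0$, $k_i\in\mathbb{Z}$ ($a^0$ = empty word). For $0\le i\le j\le n$: $w_{i,j}=a_i^{k_i}y_{i+1}\cdots y_ja_j^{k_j}$, $k_{i,j}=\sum_{\nu=i}^{j}k_\nu\prod_{\mu=i+1}^{\nu}\alpha_{y_\mu}/\beta_{y_\mu}\in\mathbb{Q}$.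 Fix an orientation $D\subseteq E(Y)$ and let $\rho$ map words additively to $\mathbb{Z}^D$ via $\rho(a^k)=0$, $\rho(y)=e_y$, $\rho(\bar y)=-e_y$ ($y\in D$). On $\{1,\dots,n\}$ let $i\sim_{\mathcal{C}}j$ iff $y_i=\bar y_j$ and, for $i<j$, $\rho(w_{i,j-1})=0$ and $k_{i,j-1}\in\beta_{y_i}\mathbb{Z}$ (symmetrically for $j<i$); $i\approx j$ iff $i=j$ or $i\sim_{\mathcal{C}}\ell\sim_{\mathcal{C}}j$ for some $\ell$ (an equivalence relation). $\Sigma_w$ is the set of $\approx$-classes $[i]$, enlarged: $\overline{[i]}:=[j]$ if $i\sim_{\mathcal{C}}j$ for some $j$ (well defined), otherwise $\overline{[i]}$ is a new element; this is a fixed-point-free involution on $\Sigma_w$. $\Lambda_w$ contains one element of each pair $\{x,\bar x\}$; $F_{\Lambda_w}$ is the free group on $\Lambda_w$ with $\bar x=x^{-1}$; a word over $\Sigma_w$ is freely reduced if it has no factor $x\bar x$. Britton reductions are the rules $a^ka^m\to a^{k+m}$ ($a\in V(Y)$, $k,m\neq0$) and $y\,b^{\beta_y m}\bar y\to a^{\alpha_y m}$ ($a=\iota(y)$, $b=\tau(y)$, $m\in\mathbb{Z}$); a word is Britton-reduced if none applies. *)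

theory Defs
  imports Main "HOL.Rat"
begin

definition gbs_graph ::
  "'v set \<Rightarrow> 'e set \<Rightarrow> ('e \<Rightarrow> 'v) \<Rightarrow> ('e \<Rightarrow> 'v) \<Rightarrow> ('e \<Rightarrow> 'e) \<Rightarrow> ('e \<Rightarrow> int) \<Rightarrow> ('e \<Rightarrow> int) \<Rightarrow> bool"
where
  "gbs_graph V E iota tau bar alpha beta \<longleftrightarrow>
     finite V \<and> finite E \<and>
     (\<forall>y\<in>E. iota y \<in> V \<and> tau y \<in> V \<and> bar y \<in> E \<and> bar y \<noteq> y \<and> bar (bar y) = y \<and>
             iota (bar y) = tau y \<and> alpha y \<noteq> 0 \<and> beta y \<noteq> 0 \<and> alpha y = beta (bar y)) \<and>
     (\<forall>a\<in>V. \<forall>b\<in>V. (a, b) \<in> {(iota y, tau y) | y. y \<in> E}\<^sup>*)"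

definition orientation :: "'e set \<Rightarrow> ('e \<Rightarrow> 'e) \<Rightarrow> 'e set \<Rightarrow> bool" where
  "orientation E bar D \<longleftrightarrow> D \<subseteq> E \<and> (\<forall>y\<in>E. y \<in> D \<longleftrightarrow> bar y \<notin> D)"

datatype ('v, 'e) gen = GV 'v | GE 'e

type_synonym ('v, 'e) letter = "('v, 'e) gen \<times> bool"  \<comment> \<open>True = positive exponent\<close>

definition inv_letter :: "('v, 'e) letter \<Rightarrow> ('v, 'e) letter" where
  "inv_letter x = (fst x, \<not> snd x)"

definition powl :: "'v \<Rightarrow> int \<Rightarrow> ('v, 'e) letter list" where
  "powl a k = replicate (nat \<bar>k\<bar>) (GV a, k > 0)"

definition relators ::
  "'e set \<Rightarrow> ('e \<Rightarrow> 'v) \<Rightarrow> ('e \<Rightarrow> 'v) \<Rightarrow> ('e \<Rightarrow> 'e) \<Rightarrow> ('e \<Rightarrow> int) \<Rightarrow> ('e \<Rightarrow> int) \<Rightarrow> ('v, 'e) letter list set"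
where
  "relators E iota tau bar alpha beta =
     {[(GE (bar y), True), (GE y, True)] | y. y \<in> E} \<union>
     {[(GE y, True)] @ powl (tau y) (beta y) @ [(GE (bar y), True)] @ powl (iota y) (- alpha y) | y. y \<in> E}"

definition pres_step ::
  "'e set \<Rightarrow> ('e \<Rightarrow> 'v) \<Rightarrow> ('e \<Rightarrow> 'v) \<Rightarrow> ('e \<Rightarrow> 'e) \<Rightarrow> ('e \<Rightarrow> int) \<Rightarrow> ('e \<Rightarrow> int) \<Rightarrow> (('v, 'e) letter list \<times> ('v, 'e) letter list) set"
where
  "pres_step E iota tau bar alpha beta =
     {(u @ [x, inv_letter x] @ v, u @ v) | u x v. True} \<union>
     {(u @ r @ v, u @ v) | u r v. r \<in> relators E iota tau bar alpha beta}"

definition FG_eq ::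
  "'e set \<Rightarrow> ('e \<Rightarrow> 'v) \<Rightarrow> ('e \<Rightarrow> 'v) \<Rightarrow> ('e \<Rightarrow> 'e) \<Rightarrow> ('e \<Rightarrow> int) \<Rightarrow> ('e \<Rightarrow> int) \<Rightarrow> ('v, 'e) letter list \<Rightarrow> ('v, 'e) letter list \<Rightarrow> bool"
where
  "FG_eq E iota tau bar alpha beta u v \<longleftrightarrow>
     (u, v) \<in> (pres_step E iota tau bar alpha beta \<union> (pres_step E iota tau bar alpha beta)\<inverse>)\<^sup>*"

datatype ('v, 'e) syl = SP 'v int | SE 'e

definition pw :: "'v \<Rightarrow> int \<Rightarrow> ('v, 'e) syl list" where
  "pw a k = (if k = 0 then [] else [SP a k])"

fun syl_letters :: "('v, 'e) syl \<Rightarrow> ('v, 'e) letter list" where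
  "syl_letters (SP a k) = powl a k"
| "syl_letters (SE y) = [(GE y, True)]"

definition letters :: "('v, 'e) syl list \<Rightarrow> ('v, 'e) letter list" where
  "letters ws = concat (map syl_letters ws)"

text \<open>The factorization a0^k0 y1 a1^k1 ... yn an^kn, given by a0, k0 and the list
  [(y1,k1),...,(yn,kn)]; the vertex a_i is tau(y_i).\<close>
definition fact_word :: "('e \<Rightarrow> 'v) \<Rightarrow> 'v \<Rightarrow> int \<Rightarrow> ('e \<times> int) list \<Rightarrow> ('v, 'e) syl list" where
  "fact_word tau a0 k0 ps = pw a0 k0 @ concat (map (\<lambda>(e, m). SE e # pw (tau e) m) ps)"

definition is_factorization ::
  "'v set \<Rightarrow> 'e set \<Rightarrow> ('e \<Rightarrow> 'v) \<Rightarrow> ('e \<Rightarrow> 'v) \<Rightarrow> 'v \<Rightarrow> ('e \<times> int) list \<Rightarrow> bool"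
where
  "is_factorization V E iota tau a0 ps \<longleftrightarrow>
     a0 \<in> V \<and> (\<forall>p\<in>set ps. fst p \<in> E) \<and>
     (\<forall>l < length ps. iota (fst (ps ! l)) = (if l = 0 then a0 else tau (fst (ps ! (l - 1))))) \<and>
     (ps \<noteq> [] \<longrightarrow> tau (fst (last ps)) = a0)"

definition britton_step ::
  "'e set \<Rightarrow> ('e \<Rightarrow> 'v) \<Rightarrow> ('e \<Rightarrow> 'v) \<Rightarrow> ('e \<Rightarrow> 'e) \<Rightarrow> ('e \<Rightarrow> int) \<Rightarrow> ('e \<Rightarrow> int) \<Rightarrow> (('v, 'e) syl list \<times> ('v, 'e) syl list) set"
where
  "britton_step E iota tau bar alpha beta =
     {(u @ [SP a k, SP a m] @ v, u @ pw a (k + m) @ v) | u a k m v. k \<noteq> 0 \<and> m \<noteq> 0} \<union>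
     {(u @ [SE y] @ pw (tau y) (beta y * m) @ [SE (bar y)] @ v, u @ pw (iota y) (alpha y * m) @ v)
        | u y m v. y \<in> E}"

definition britton_reduced ::
  "'e set \<Rightarrow> ('e \<Rightarrow> 'v) \<Rightarrow> ('e \<Rightarrow> 'v) \<Rightarrow> ('e \<Rightarrow> 'e) \<Rightarrow> ('e \<Rightarrow> int) \<Rightarrow> ('e \<Rightarrow> int) \<Rightarrow> ('v, 'e) syl list \<Rightarrow> bool"
where
  "britton_reduced E iota tau bar alpha beta ws \<longleftrightarrow>
     \<not> (\<exists>ws'. (ws, ws') \<in> britton_step E iota tau bar alpha beta)"

definition kij :: "('e \<Rightarrow> int) \<Rightarrow> ('e \<Rightarrow> int) \<Rightarrow> (nat \<Rightarrow> int) \<Rightarrow> (nat \<Rightarrow> 'e) \<Rightarrow> nat \<Rightarrow> nat \<Rightarrow> rat" where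
  "kij alpha beta k y i j =
     (\<Sum>\<nu>\<in>{i..j}. of_int (k \<nu>) * (\<Prod>\<mu>\<in>{i+1..\<nu>}. of_int (alpha (y \<mu>)) / of_int (beta (y \<mu>))))"

definition rho :: "'e set \<Rightarrow> ('e \<Rightarrow> 'e) \<Rightarrow> (nat \<Rightarrow> 'e) \<Rightarrow> nat \<Rightarrow> nat \<Rightarrow> 'e \<Rightarrow> int" where
  "rho D bar y i j e =
     (if e \<in> D then int (card {\<mu>. i < \<mu> \<and> \<mu> \<le> j \<and> y \<mu> = e}) - int (card {\<mu>. i < \<mu> \<and> \<mu> \<le> j \<and> y \<mu> = bar e})
      else 0)"

definition simC_cond ::
  "'e set \<Rightarrow> ('e \<Rightarrow> 'e) \<Rightarrow> ('e \<Rightarrow> int) \<Rightarrow> ('e \<Rightarrow> int) \<Rightarrow> (nat \<Rightarrow> int) \<Rightarrow> (nat \<Rightarrow> 'e) \<Rightarrow> nat \<Rightarrow> nat \<Rightarrow> bool"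
where
  "simC_cond D bar alpha beta k y i j \<longleftrightarrow>
     rho D bar y i (j - 1) = (\<lambda>_. 0) \<and>
     (\<exists>m::int. kij alpha beta k y i (j - 1) = of_int (beta (y i) * m))"

definition simC ::
  "'e set \<Rightarrow> ('e \<Rightarrow> 'e) \<Rightarrow> ('e \<Rightarrow> int) \<Rightarrow> ('e \<Rightarrow> int) \<Rightarrow> nat \<Rightarrow> (nat \<Rightarrow> int) \<Rightarrow> (nat \<Rightarrow> 'e) \<Rightarrow> nat \<Rightarrow> nat \<Rightarrow> bool"
where
  "simC D bar alpha beta n k y i j \<longleftrightarrow>
     i \<in> {1..n} \<and> j \<in> {1..n} \<and> y i = bar (y j) \<and>
     (if i < j then simC_cond D bar alpha beta k y i j
      else j < i \<and> simC_cond D bar alpha beta k y j i)"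

definition approxC ::
  "'e set \<Rightarrow> ('e \<Rightarrow> 'e) \<Rightarrow> ('e \<Rightarrow> int) \<Rightarrow> ('e \<Rightarrow> int) \<Rightarrow> nat \<Rightarrow> (nat \<Rightarrow> int) \<Rightarrow> (nat \<Rightarrow> 'e) \<Rightarrow> nat \<Rightarrow> nat \<Rightarrow> bool"
where
  "approxC D bar alpha beta n k y i j \<longleftrightarrow>
     i = j \<or> (\<exists>l. simC D bar alpha beta n k y i l \<and> simC D bar alpha beta n k y l j)"

definition cls ::
  "'e set \<Rightarrow> ('e \<Rightarrow> 'e) \<Rightarrow> ('e \<Rightarrow> int) \<Rightarrow> ('e \<Rightarrow> int) \<Rightarrow> nat \<Rightarrow> (nat \<Rightarrow> int) \<Rightarrow> (nat \<Rightarrow> 'e) \<Rightarrow> nat \<Rightarrow> nat set"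
where
  "cls D bar alpha beta n k y i = {j \<in> {1..n}. approxC D bar alpha beta n k y i j}"

text \<open>Elements of Sigma_w: (C, False) is the class C itself; (C, True) is the new element
  bar C added for a class C without a partner.  The involution on Sigma_w:\<close>
definition sigma_bar ::
  "'e set \<Rightarrow> ('e \<Rightarrow> 'e) \<Rightarrow> ('e \<Rightarrow> int) \<Rightarrow> ('e \<Rightarrow> int) \<Rightarrow> nat \<Rightarrow> (nat \<Rightarrow> int) \<Rightarrow> (nat \<Rightarrow> 'e) \<Rightarrow> nat set \<times> bool \<Rightarrow> nat set \<times> bool"
where
  "sigma_bar D bar alpha beta n k y x =
     (if snd x then (fst x, False)
      else if \<exists>i\<in>fst x. \<exists>j. simC D bar alpha beta n k y i j
      then (cls D bar alpha beta n k y (SOME j. \<exists>i\<in>fst x. simC D bar alpha beta n k y i j), False)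
      else (fst x, True))"

text \<open>Free group over an alphabet with a fixed-point-free involution invol (free group on
  one representative of each pair, with bar x = x^-1).\<close>
definition free_step :: "('a \<Rightarrow> 'a) \<Rightarrow> ('a list \<times> 'a list) set" where
  "free_step invol = {(u @ [x, invol x] @ v, u @ v) | u x v. True}"

definition free_eq :: "('a \<Rightarrow> 'a) \<Rightarrow> 'a list \<Rightarrow> 'a list \<Rightarrow> bool" where
  "free_eq invol u v \<longleftrightarrow> (u, v) \<in> (free_step invol \<union> (free_step invol)\<inverse>)\<^sup>*"

definition freely_reduced :: "('a \<Rightarrow> 'a) \<Rightarrow> 'a list \<Rightarrow> bool" where
  "freely_reduced invol xs \<longleftrightarrow> \<not> (\<exists>u x v. xs = u @ [x, invol x] @ v)"

text \<open>Given the chosen indices idx = [i_1,...,i_j] (and i_0 = 0), the exponent of the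
  l-th vertex syllable of w-hat (l = 0..j) is k_{i_l, i_{l+1}-1}, with i_{j+1}-1 = n.\<close>
definition hat_start :: "nat list \<Rightarrow> nat \<Rightarrow> nat" where
  "hat_start idx l = (if l = 0 then 0 else idx ! (l - 1))"

definition hat_end :: "nat \<Rightarrow> nat list \<Rightarrow> nat \<Rightarrow> nat" where
  "hat_end n idx l = (if l < length idx then idx ! l - 1 else n)"

end

theory Submission
  imports Defs
begin

text \<open>
  Let \<open>\<Pi>_j\<close> be the product of \<open>\<alpha>(y_\<mu>)/\<beta>(y_\<mu>)\<close> over \<open>\<mu> \<le> j\<close> and
  \<open>F_j = \<Sum>_{\<nu><j} k_\<nu> \<Pi>_\<nu>\<close>. Then \<open>k_{i,j} \<Pi>_i = F_{j+1} - F_i\<close>, and \<open>\<Pi>_j\<close> depends only on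
  \<open>\<rho>(w_{0,j})\<close>. So, with the phase \<open>u_i = F_i / (\<Pi>_i \<beta>(y_i))\<close>, the relation \<open>i \<sim>_C j\<close> says
  that \<open>y_i = bar y_j\<close>, that the \<open>\<rho>\<close>-vectors on both sides of the two edges match, and that
  \<open>u_i - u_j\<close> is an integer.

  Freely reduce \<open>[1] \<cdots> [n]\<close> with a stack. Each cancellation of the top \<open>[q]\<close> against \<open>[p+1]\<close>
  is a pinch \<open>y_q b^{\<beta> m} bar y_q = a^{\<alpha> m}\<close>, so the indices left on the stack span a
  factorization equal to \<open>w\<close> whose vertex exponents are the integers \<open>k_{i,j}\<close>. By confluence of
  free reduction the stack carries the same classes as \<open>i_1, \<dots>, i_j\<close>; indices of one class have the
  same edge, the same \<open>\<rho>\<close>-data and phases differing by integers, so sliding powers across edges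
  with \<open>a^{\<alpha> m} y = y b^{\<beta> m}\<close> turns the stack factorization into \<open>w-hat\<close>. Finally, a pinch
  inside \<open>w-hat\<close> would make two consecutive chosen indices \<open>\<sim>_C\<close>-related, contradicting free
  reducedness.
\<close>

section \<open>Free reduction by a stack\<close>

definition stack_push :: "('a \<Rightarrow> 'a) \<Rightarrow> 'a list \<Rightarrow> 'a \<Rightarrow> 'a list" where
  "stack_push s st x = (case st of [] \<Rightarrow> [x] | z # zs \<Rightarrow> if x = s z then zs else x # st)"

definition stack_reduce :: "('a \<Rightarrow> 'a) \<Rightarrow> 'a list \<Rightarrow> 'a list" where
  "stack_reduce s w = foldl (stack_push s) [] w"

fun reduced_stack :: "('a \<Rightarrow> 'a) \<Rightarrow> 'a list \<Rightarrow> bool" where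
  "reduced_stack s (z # z' # zs) \<longleftrightarrow> z \<noteq> s z' \<and> reduced_stack s (z' # zs)"
| "reduced_stack s _ \<longleftrightarrow> True"

lemma reduced_stack_tl: "reduced_stack s (z # zs) \<Longrightarrow> reduced_stack s zs"
  by (cases zs) auto

lemma reduced_stack_foldl_push:
  "reduced_stack s st \<Longrightarrow> reduced_stack s (foldl (stack_push s) st w)"
proof (induction w arbitrary: st)
  case (Cons x w)
  have "reduced_stack s (stack_push s st x)"
    using Cons.prems unfolding stack_push_def by (cases st) (auto dest: reduced_stack_tl)
  then show ?case using Cons.IH by simp
qed simp

lemma set_foldl_stack_push: "set (foldl (stack_push s) st w) \<subseteq> set st \<union> set w"
proof (induction w arbitrary: st)
  case (Cons x w)
  have "set (stack_push s st x) \<subseteq> insert x (set st)"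
    unfolding stack_push_def by (cases st) auto
  then show ?case using Cons.IH[of "stack_push s st x"] by auto
qed simp

lemma stack_push_inverse:
  assumes "reduced_stack s st" and "\<forall>z\<in>set st. s (s z) = z"
  shows "stack_push s (stack_push s st x) (s x) = st"
proof (cases st)
  case (Cons z zs)
  then show ?thesis
    using assms unfolding stack_push_def by (cases zs) auto
qed (simp add: stack_push_def)

lemma stack_reduce_cancel:
  assumes "\<forall>z\<in>set u. s (s z) = z"
  shows "stack_reduce s (u @ [x, s x] @ v) = stack_reduce s (u @ v)"
proof -
  let ?st = "foldl (stack_push s) [] u"
  have "reduced_stack s ?st" by (rule reduced_stack_foldl_push) simp
  moreover have "\<forall>z\<in>set ?st. s (s z) = z" using set_foldl_stack_push[of s "[]" u] assms by auto
  ultimately show ?thesis unfolding stack_reduce_def by (simp add: stack_push_inverse)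
qed

text \<open>\<open>s\<close> need only be involutive on the image of a projection \<open>f\<close> commuting with it: below,
  \<open>sigma_bar\<close> is an involution on the letters of \<open>\<Sigma>\<^sub>w\<close> but not on all of its type.\<close>

lemma stack_reduce_free_eq:
  assumes commute: "\<And>x. s (f x) = f (s x)" and invol: "\<And>x. s (s (f x)) = f x"
    and "free_eq s w1 w2"
  shows "stack_reduce s (map f w1) = stack_reduce s (map f w2)"
proof -
  have step: "stack_reduce s (map f a) = stack_reduce s (map f b)" if ab: "(a, b) \<in> free_step s" for a b
  proof -
    obtain u x v where uxv: "a = u @ [x, s x] @ v" "b = u @ v"
      using ab unfolding free_step_def by auto
    have "map f a = map f u @ [f x, s (f x)] @ map f v" using uxv commute by simp
    then show ?thesis using uxv stack_reduce_cancel[of "map f u" s] invol by simp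
  qed
  have "(w1, w2) \<in> (free_step s \<union> (free_step s)\<inverse>)\<^sup>*" using assms(3) unfolding free_eq_def .
  then show ?thesis
    by (induction rule: rtrancl_induct) (auto dest: step)
qed

lemma stack_reduce_freely_reduced: "freely_reduced s w \<Longrightarrow> stack_reduce s w = rev w"
proof (induction w rule: rev_induct)
  case (snoc x w)
  have "freely_reduced s w"
    using snoc.prems unfolding freely_reduced_def by (metis append.assoc)
  moreover have "x \<noteq> s (last w)" if "w \<noteq> []"
  proof
    assume "x = s (last w)"
    then have "w @ [x] = butlast w @ [last w, s (last w)] @ []" using that by simp
    then show False using snoc.prems unfolding freely_reduced_def by blast
  qed
  ultimately show ?case using snoc.IH unfolding stack_reduce_def stack_push_def
    by (cases w rule: rev_cases) (auto split: list.split)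
qed (simp add: stack_reduce_def)

lemma freely_reduced_nth:
  assumes "freely_reduced s xs" and "Suc l < length xs"
  shows "xs ! Suc l \<noteq> s (xs ! l)"
proof
  assume "xs ! Suc l = s (xs ! l)"
  moreover have "xs = take l xs @ xs ! l # drop (Suc l) xs" "drop (Suc l) xs = xs ! Suc l # drop (Suc (Suc l)) xs"
    using assms(2) by (simp_all add: id_take_nth_drop Cons_nth_drop_Suc)
  ultimately have "xs = take l xs @ [xs ! l, s (xs ! l)] @ drop (Suc (Suc l)) xs" by simp
  then show False using assms(1) unfolding freely_reduced_def by blast
qed

text \<open>The same algorithm on positions \<open>i\<close> labelled by \<open>L i\<close>, so that the stack remembers where
  its letters come from.\<close>

definition stack_push_by :: "('b \<Rightarrow> 'a) \<Rightarrow> ('a \<Rightarrow> 'a) \<Rightarrow> 'b list \<Rightarrow> 'b \<Rightarrow> 'b list" where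
  "stack_push_by L s st i = (case st of [] \<Rightarrow> [i] | j # js \<Rightarrow> if L i = s (L j) then js else i # st)"

lemma map_foldl_stack_push_by:
  "map L (foldl (stack_push_by L s) st w) = foldl (stack_push s) (map L st) (map L w)"
proof (induction w arbitrary: st)
  case (Cons i w)
  have "map L (stack_push_by L s st i) = stack_push s (map L st) (L i)"
    unfolding stack_push_by_def stack_push_def by (cases st) auto
  then show ?case using Cons.IH by simp
qed simp

section \<open>The presented group\<close>

locale gbs =
  fixes V :: "'v set" and E :: "'e set" and iota tau :: "'e \<Rightarrow> 'v" and bar :: "'e \<Rightarrow> 'e"
    and alpha beta :: "'e \<Rightarrow> int"
  assumes graph: "gbs_graph V E iota tau bar alpha beta"
begin

lemma
  assumes "e \<in> E"
  shows bar_in_E: "bar e \<in> E" and bar_neq: "bar e \<noteq> e" and bar_bar: "bar (bar e) = e"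
    and tau_bar: "tau (bar e) = iota e"
    and alpha_nonzero: "alpha e \<noteq> 0" and beta_nonzero: "beta e \<noteq> 0"
    and beta_bar: "beta (bar e) = alpha e" and alpha_bar: "alpha (bar e) = beta e"
proof -
  have edges: "\<And>e. e \<in> E \<Longrightarrow> bar e \<in> E \<and> bar e \<noteq> e \<and> bar (bar e) = e \<and>
      iota (bar e) = tau e \<and> alpha e \<noteq> 0 \<and> beta e \<noteq> 0 \<and> alpha e = beta (bar e)"
    using graph unfolding gbs_graph_def by blast
  show "bar e \<in> E" "bar e \<noteq> e" "bar (bar e) = e" "alpha e \<noteq> 0" "beta e \<noteq> 0" "beta (bar e) = alpha e"
    using edges[OF assms] by auto
  show "tau (bar e) = iota e" "alpha (bar e) = beta e"
    using edges[OF assms] edges[of "bar e"] by metis+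
qed

abbreviation FG where "FG \<equiv> FG_eq E iota tau bar alpha beta"

abbreviation ge :: "'e \<Rightarrow> ('v, 'e) letter" where "ge e \<equiv> (GE e, True)"

lemma FG_refl [simp, intro]: "FG u u"
  unfolding FG_eq_def by simp

lemma FG_trans [trans]: "FG u v \<Longrightarrow> FG v w \<Longrightarrow> FG u w"
  unfolding FG_eq_def by simp

lemma FG_sym: "FG u v \<Longrightarrow> FG v u"
  unfolding FG_eq_def by (metis converse_Un converse_converse rtrancl_converseI sup_commute)

lemma FG_context:
  assumes "FG a b"
  shows "FG (c @ a @ d) (c @ b @ d)"
proof -
  let ?R = "pres_step E iota tau bar alpha beta"
  have "(c @ a' @ d, c @ b' @ d) \<in> ?R" if "(a', b') \<in> ?R" for a' b'
  proof -
    from that consider (free) u x v where "a' = u @ [x, inv_letter x] @ v" "b' = u @ v"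
      | (rel) u r v where "a' = u @ r @ v" "b' = u @ v" "r \<in> relators E iota tau bar alpha beta"
      unfolding pres_step_def by auto
    then show ?thesis
    proof cases
      case free
      then show ?thesis unfolding pres_step_def
        by (intro UnI1 CollectI exI[of _ "c @ u"] exI[of _ x] exI[of _ "v @ d"]) simp
    next
      case rel
      then show ?thesis unfolding pres_step_def
        by (intro UnI2 CollectI exI[of _ "c @ u"] exI[of _ r] exI[of _ "v @ d"]) simp
    qed
  qed
  note step = this
  have "(a, b) \<in> (?R \<union> ?R\<inverse>)\<^sup>*" using assms unfolding FG_eq_def .
  then show ?thesis
    unfolding FG_eq_def by (induction rule: rtrancl_induct) (blast intro: rtrancl_into_rtrancl step)+
qed

lemma FG_subst: "FG a b \<Longrightarrow> u = c @ a @ d \<Longrightarrow> v = c @ b @ d \<Longrightarrow> FG u v"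
  using FG_context by blast

lemma FG_append: "FG a a' \<Longrightarrow> FG b b' \<Longrightarrow> FG (a @ b) (a' @ b')"
  using FG_context[of a a' "[]" b] FG_context[of b b' a' "[]"] FG_trans by auto

lemma FG_relator: "r \<in> relators E iota tau bar alpha beta \<Longrightarrow> FG r []"
proof -
  assume "r \<in> relators E iota tau bar alpha beta"
  then have "([] @ r @ [], [] @ []) \<in> pres_step E iota tau bar alpha beta"
    unfolding pres_step_def by blast
  then show ?thesis unfolding FG_eq_def by auto
qed

lemma FG_free_cancel: "FG [x, inv_letter x] []"
proof -
  have "([] @ [x, inv_letter x] @ [], [] @ []) \<in> pres_step E iota tau bar alpha beta"
    unfolding pres_step_def by blast
  then show ?thesis unfolding FG_eq_def by auto
qed

lemma FG_replicate_cancel: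
  "FG (replicate p x @ replicate q (inv_letter x)) (replicate (p - q) x @ replicate (q - p) (inv_letter x))"
proof (induction p arbitrary: q)
  case (Suc p)
  show ?case
  proof (cases q)
    case (Suc q')
    have "replicate (Suc p) x @ replicate q (inv_letter x) =
        replicate p x @ [x, inv_letter x] @ replicate q' (inv_letter x)"
      using Suc by (simp add: replicate_append_same[symmetric])
    also have "FG \<dots> (replicate p x @ [] @ replicate q' (inv_letter x))"
      by (rule FG_context[OF FG_free_cancel])
    also have "FG \<dots> (replicate (p - q') x @ replicate (q' - p) (inv_letter x))"
      using Suc.IH by simp
    finally show ?thesis using Suc by simp
  qed auto
qed auto

lemma FG_powl_add: "FG (powl a s @ powl a t) (powl a (s + t))"
proof -
  define pos neg where "pos = ((GV a, True) :: ('v, 'e) letter)" and "neg = ((GV a, False) :: ('v, 'e) letter)"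
  have inv: "inv_letter pos = neg" "inv_letter neg = pos"
    unfolding pos_def neg_def inv_letter_def by simp_all
  have powl_pos: "powl a t = replicate (nat t) pos @ replicate (nat (- t)) neg" for t
    unfolding powl_def pos_def neg_def by (cases "t > 0") auto
  consider "s \<ge> 0" "t \<ge> 0" | "s \<le> 0" "t \<le> 0" | "s > 0" "t < 0" | "s < 0" "t > 0"
    by linarith
  then show ?thesis
  proof cases
    case 1
    then have "nat (s + t) = nat s + nat t" by simp
    then show ?thesis using 1 by (simp add: powl_pos replicate_add)
  next
    case 2
    then have "nat (- (s + t)) = nat (- s) + nat (- t)" by simp
    then show ?thesis using 2 by (simp add: powl_pos replicate_add del: minus_add_distrib)
  next
    case 3
    have "nat s - nat (- t) = nat (s + t)" "nat (- t) - nat s = nat (- (s + t))" using 3 by linarith+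
    then show ?thesis
      using 3 FG_replicate_cancel[of "nat s" pos "nat (- t)"] inv by (simp add: powl_pos del: minus_add_distrib)
  next
    case 4
    have "nat (- s) - nat t = nat (- (s + t))" "nat t - nat (- s) = nat (s + t)" using 4 by linarith+
    then show ?thesis
      using 4 FG_replicate_cancel[of "nat (- s)" neg "nat t"] inv
      by (cases "s + t \<ge> 0") (simp_all add: powl_pos del: minus_add_distrib)
  qed
qed

lemma FG_powl_cancel: "FG (powl a (- t) @ powl a t) []"
  using FG_powl_add[of a "- t" t] by (simp add: powl_def)

lemma FG_edge_cancel:
  assumes "e \<in> E"
  shows "FG [ge (bar e), ge e] []" and "FG [ge e, ge (bar e)] []"
proof -
  have "FG [ge (bar e), ge e] []" if "e \<in> E" for e
    using that by (intro FG_relator) (auto simp: relators_def)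
  from this[OF assms] this[OF bar_in_E[OF assms]] show "FG [ge (bar e), ge e] []" "FG [ge e, ge (bar e)] []"
    using bar_bar[OF assms] by simp_all
qed

lemma FG_solve_powl: "FG (x @ powl a (- t)) [] \<Longrightarrow> FG x (powl a t)"
proof -
  assume rel: "FG (x @ powl a (- t)) []"
  have "FG x (x @ powl a (- t) @ powl a t)"
    by (rule FG_subst[OF FG_sym[OF FG_powl_cancel], where c = x and d = "[]"]) simp_all
  also have "FG \<dots> (powl a t)"
    by (rule FG_subst[OF rel, where c = "[]" and d = "powl a t"]) simp_all
  finally show ?thesis .
qed

abbreviation pinch_word :: "'e \<Rightarrow> int \<Rightarrow> ('v, 'e) letter list" where
  "pinch_word e s \<equiv> [ge e] @ powl (tau e) s @ [ge (bar e)]"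

lemma FG_pinch_word_zero: "e \<in> E \<Longrightarrow> FG (pinch_word e 0) []"
  using FG_edge_cancel(2) by (simp add: powl_def)

lemma FG_pinch_word_add:
  assumes "e \<in> E"
  shows "FG (pinch_word e s @ pinch_word e t) (pinch_word e (s + t))"
proof -
  have "FG (pinch_word e s @ pinch_word e t) ([ge e] @ (powl (tau e) s @ powl (tau e) t) @ [ge (bar e)])"
    by (rule FG_subst[OF FG_edge_cancel(1)[OF assms], where c = "[ge e] @ powl (tau e) s"
          and d = "powl (tau e) t @ [ge (bar e)]"]) simp_all
  also have "FG \<dots> (pinch_word e (s + t))"
    by (rule FG_context[OF FG_powl_add])
  finally show ?thesis .
qed

lemma FG_pinch_beta:
  assumes "e \<in> E"
  shows "FG (pinch_word e (beta e)) (powl (iota e) (alpha e))"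
  using assms by (intro FG_solve_powl FG_relator) (auto simp: relators_def)

lemma FG_pinch_minus_beta:
  assumes "e \<in> E"
  shows "FG (pinch_word e (- beta e)) (powl (iota e) (- alpha e))"
proof (rule FG_solve_powl)
  have "FG (pinch_word e (- beta e) @ powl (iota e) (alpha e)) (pinch_word e (- beta e) @ pinch_word e (beta e))"
    by (rule FG_subst[OF FG_sym[OF FG_pinch_beta[OF assms]], where c = "pinch_word e (- beta e)" and d = "[]"])
      simp_all
  also have "FG \<dots> (pinch_word e 0)"
    using FG_pinch_word_add[OF assms, of "- beta e" "beta e"] by simp
  also have "FG \<dots> []" by (rule FG_pinch_word_zero[OF assms])
  finally show "FG (pinch_word e (- beta e) @ powl (iota e) (- (- alpha e))) []" by simp
qed

lemma FG_pinch_multiple: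
  assumes e: "e \<in> E" and base: "FG (pinch_word e s) (powl (iota e) t)"
  shows "FG (pinch_word e (s * int j)) (powl (iota e) (t * int j))"
proof (induction j)
  case 0
  then show ?case using FG_pinch_word_zero[OF e] by (simp add: powl_def)
next
  case (Suc j)
  have "FG (pinch_word e (s * int (Suc j))) (pinch_word e (s * int j) @ pinch_word e s)"
    using FG_sym[OF FG_pinch_word_add[OF e, of "s * int j" s]] by (simp add: algebra_simps)
  also have "FG \<dots> (powl (iota e) (t * int j) @ powl (iota e) t)"
    by (rule FG_append[OF Suc.IH base])
  also have "FG \<dots> (powl (iota e) (t * int (Suc j)))"
    using FG_powl_add[of "iota e" "t * int j" t] by (simp add: algebra_simps)
  finally show ?case .
qed

lemma FG_pinch:
  assumes "e \<in> E"
  shows "FG (pinch_word e (beta e * m)) (powl (iota e) (alpha e * m))"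
proof (cases "m \<ge> 0")
  case True
  then show ?thesis
    using FG_pinch_multiple[OF assms FG_pinch_beta[OF assms], of "nat m"] by (simp add: mult.commute)
next
  case False
  then show ?thesis
    using FG_pinch_multiple[OF assms FG_pinch_minus_beta[OF assms], of "nat (- m)"] by (simp add: mult.commute)
qed

lemma FG_slide:
  assumes "e \<in> E"
  shows "FG (powl (iota e) (alpha e * m) @ [ge e]) ([ge e] @ powl (tau e) (beta e * m))"
proof -
  have "FG (powl (iota e) (alpha e * m) @ [ge e]) (pinch_word e (beta e * m) @ [ge e])"
    by (rule FG_subst[OF FG_sym[OF FG_pinch[OF assms]], where c = "[]" and d = "[ge e]"]) simp_all
  also have "FG \<dots> ([ge e] @ powl (tau e) (beta e * m))"
    by (rule FG_subst[OF FG_edge_cancel(1)[OF assms], where c = "[ge e] @ powl (tau e) (beta e * m)"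
          and d = "[]"]) simp_all
  finally show ?thesis .
qed

lemma FG_pinch_merge:
  assumes "e \<in> E"
  shows "FG (powl (iota e) s @ pinch_word e (beta e * m) @ powl (iota e) t) (powl (iota e) (s + alpha e * m + t))"
proof -
  have "FG (powl (iota e) s @ pinch_word e (beta e * m) @ powl (iota e) t)
      (powl (iota e) s @ powl (iota e) (alpha e * m) @ powl (iota e) t)"
    by (rule FG_context[OF FG_pinch[OF assms]])
  also have "FG \<dots> (powl (iota e) (s + alpha e * m) @ powl (iota e) t)"
    using FG_context[OF FG_powl_add, of "[]" _ _ _ "powl (iota e) t"] by simp
  also have "FG \<dots> (powl (iota e) (s + alpha e * m + t))"
    by (rule FG_powl_add)
  finally show ?thesis .
qed

end

section \<open>Syllable words of factorizations\<close>

lemma letters_Nil [simp]: "letters [] = []"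
  and letters_append [simp]: "letters (xs @ ys) = letters xs @ letters ys"
  and letters_Cons_SE [simp]: "letters (SE e # xs) = (GE e, True) # letters xs"
  and letters_pw [simp]: "letters (pw a t) = powl a t"
  unfolding letters_def pw_def by (simp_all add: powl_def)

lemma pw_0 [simp]: "pw a 0 = []"
  unfolding pw_def by simp

lemma fact_word_Nil: "fact_word tau a t [] = pw a t"
  and fact_word_Cons: "fact_word tau a t ((e, m) # ps) = pw a t @ SE e # fact_word tau (tau e) m ps"
  and fact_word_snoc: "fact_word tau a t (ps @ [(e, m)]) = fact_word tau a t ps @ SE e # pw (tau e) m"
  unfolding fact_word_def by simp_all

fun is_power :: "('v, 'e) syl \<Rightarrow> bool" where
  "is_power (SP a k) = True"
| "is_power (SE e) = False"

lemma fact_word_no_adjacent_powers: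
  "successively (\<lambda>x x'. \<not> (is_power x \<and> is_power x')) (fact_word tau a t ps)"
  by (induction ps arbitrary: a t)
    (auto simp: fact_word_Nil fact_word_Cons pw_def successively_append_iff successively_Cons)

lemma pw_powers: "list_all is_power (pw a t)"
  unfolding pw_def by simp

lemma edge_notin_pw: "SE e \<notin> set (pw a t)"
  unfolding pw_def by simp

lemma pw_eq_imp_eq: "pw a t = pw a' t' \<Longrightarrow> t = t'"
  unfolding pw_def by (auto split: if_splits)

lemma split_at_first_edge:
  assumes "list_all is_power xs" and "xs @ SE x # ys = u @ SE e # zs"
  shows "(u = xs \<and> x = e \<and> ys = zs) \<or> (\<exists>u'. u = xs @ SE x # u' \<and> ys = u' @ SE e # zs)"
  using assms
proof (induction xs arbitrary: u)
  case Nil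
  then show ?case by (cases u) auto
next
  case (Cons z xs)
  then show ?case by (cases u) auto
qed

lemma fact_word_edge_pair:
  assumes "fact_word tau a t ps = u @ SE e # pw c s @ SE e' # v"
  shows "\<exists>l. Suc l < length ps \<and> ps ! l = (e, s) \<and> fst (ps ! Suc l) = e'"
  using assms
proof (induction ps arbitrary: a t u)
  case Nil
  then have "SE e \<in> set (pw a t)" by (simp add: fact_word_Nil)
  then show ?case by (simp add: edge_notin_pw)
next
  case (Cons p ps)
  obtain e1 m1 where p: "p = (e1, m1)" by fastforce
  have "pw a t @ SE e1 # fact_word tau (tau e1) m1 ps = u @ SE e # (pw c s @ SE e' # v)"
    using Cons.prems by (simp add: p fact_word_Cons)
  from split_at_first_edge[OF pw_powers this]
  consider "e1 = e" "fact_word tau (tau e1) m1 ps = pw c s @ SE e' # v"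
    | u' where "fact_word tau (tau e1) m1 ps = u' @ SE e # pw c s @ SE e' # v"
    by blast
  then show ?case
  proof cases
    case 1
    show ?thesis
    proof (cases ps)
      case Nil
      then have "SE e' \<in> set (pw (tau e1) m1)" using 1 by (simp add: fact_word_Nil)
      then show ?thesis by (simp add: edge_notin_pw)
    next
      case (Cons p2 ps')
      obtain e2 m2 where p2: "p2 = (e2, m2)" by fastforce
      have "pw (tau e1) m1 @ SE e2 # fact_word tau (tau e2) m2 ps' = pw c s @ SE e' # v"
        using 1 by (simp add: Cons p2 fact_word_Cons)
      from split_at_first_edge[OF pw_powers this] have "s = m1" "e2 = e'"
        using edge_notin_pw[of e2 c s] pw_eq_imp_eq by auto
      then show ?thesis using 1 p p2 Cons by (intro exI[of _ 0]) auto
    qed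
  next
    case 2
    from Cons.IH[OF this] obtain l where "Suc l < length ps" "ps ! l = (e, s)" "fst (ps ! Suc l) = e'"
      by blast
    then show ?thesis using p by (intro exI[of _ "Suc l"]) simp
  qed
qed

lemma hat_start_snoc: "l \<le> length qs \<Longrightarrow> hat_start (qs @ [q]) l = hat_start qs l"
  and hat_start_snoc_last: "hat_start (qs @ [q]) (Suc (length qs)) = q"
  and hat_end_snoc: "l \<le> length qs \<Longrightarrow> hat_end p (qs @ [q]) l = hat_end (q - 1) qs l"
  and hat_end_snoc_last: "hat_end p (qs @ [q]) (Suc (length qs)) = p"
  unfolding hat_start_def hat_end_def by (auto simp: nth_append)

section \<open>The factorization and its exponent sums\<close>

locale gbs_factorization = gbs V E iota tau bar alpha beta
  for V :: "'v set" and E :: "'e set" and iota tau bar alpha beta +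
  fixes D :: "'e set" and a0 :: 'v and n :: nat and k :: "nat \<Rightarrow> int" and y :: "nat \<Rightarrow> 'e"
  assumes orientation: "orientation E bar D"
    and factorization: "is_factorization V E iota tau a0 (map (\<lambda>i. (y i, k i)) [1..<n+1])"
begin

abbreviation N :: "nat set" where "N \<equiv> {1..n}"

lemma finite_D: "finite D"
  using orientation graph finite_subset unfolding orientation_def gbs_graph_def by blast

lemma D_subset_E: "D \<subseteq> E" and in_D_iff: "e \<in> E \<Longrightarrow> e \<in> D \<longleftrightarrow> bar e \<notin> D"
  using orientation unfolding orientation_def by blast+

lemma y_in_E: "i \<in> N \<Longrightarrow> y i \<in> E"
  using factorization unfolding is_factorization_def by (auto simp del: upt_Suc)

lemma nth_in_N: "set qs \<subseteq> N \<Longrightarrow> t < length qs \<Longrightarrow> qs ! t \<in> N"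
  using nth_mem by blast

definition vertex :: "nat \<Rightarrow> 'v" where
  "vertex i = (if i = 0 then a0 else tau (y i))"

lemma a0_in_V: "a0 \<in> V"
  using factorization unfolding is_factorization_def by blast

lemma iota_y: "i \<in> N \<Longrightarrow> iota (y i) = vertex (i - 1)"
  using factorization unfolding is_factorization_def
  by (auto simp: vertex_def Suc_diff_Suc simp del: upt_Suc dest!: spec[of _ "i - 1"])

lemma vertex_n: "vertex n = a0"
  using factorization unfolding is_factorization_def vertex_def by (simp del: upt_Suc add: last_map)

definition ratio :: "'e \<Rightarrow> rat" where
  "ratio e = of_int (alpha e) / of_int (beta e)"

lemma ratio_nonzero: "e \<in> E \<Longrightarrow> ratio e \<noteq> 0"
  by (simp add: ratio_def alpha_nonzero beta_nonzero)

lemma ratio_bar: "e \<in> E \<Longrightarrow> ratio (bar e) * ratio e = 1"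
  by (simp add: ratio_def alpha_nonzero beta_nonzero alpha_bar beta_bar)

lemma ratio_mult_beta: "e \<in> E \<Longrightarrow> ratio e * of_int (beta e) = of_int (alpha e)"
  by (simp add: ratio_def beta_nonzero)

definition ratio_prod :: "nat \<Rightarrow> nat \<Rightarrow> rat" where
  "ratio_prod i j = (\<Prod>\<mu>\<in>{i+1..j}. ratio (y \<mu>))"

lemma ratio_prod_self [simp]: "ratio_prod i i = 1"
  unfolding ratio_prod_def by simp

lemma ratio_prod_Suc: "i \<le> j \<Longrightarrow> ratio_prod i (Suc j) = ratio_prod i j * ratio (y (Suc j))"
  unfolding ratio_prod_def by (simp add: atLeastAtMostSuc_conv mult.commute)

lemma ratio_prod_split:
  assumes "i \<le> m" and "m \<le> j"
  shows "ratio_prod i j = ratio_prod i m * ratio_prod m j"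
  using assms(2) by (induction j rule: dec_induct) (use assms(1) in \<open>simp_all add: ratio_prod_Suc\<close>)

lemma ratio_prod_nonzero: "j \<le> n \<Longrightarrow> ratio_prod i j \<noteq> 0"
  unfolding ratio_prod_def using ratio_nonzero y_in_E by simp

lemma kij_eq: "kij alpha beta k y i j = (\<Sum>\<nu>\<in>{i..j}. of_int (k \<nu>) * ratio_prod i \<nu>)"
  unfolding kij_def ratio_prod_def ratio_def by simp

definition partial_sum :: "nat \<Rightarrow> rat" where
  "partial_sum j = (\<Sum>\<nu><j. of_int (k \<nu>) * ratio_prod 0 \<nu>)"

lemma kij_ratio_prod:
  assumes "i \<le> Suc j"
  shows "kij alpha beta k y i j * ratio_prod 0 i = partial_sum (Suc j) - partial_sum i"
proof -
  have "partial_sum (Suc j) = partial_sum i + (\<Sum>\<nu>\<in>{i..<Suc j}. of_int (k \<nu>) * ratio_prod 0 \<nu>)"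
    unfolding partial_sum_def lessThan_atLeast0
    by (rule sum.atLeastLessThan_concat[symmetric]) (use assms in auto)
  moreover have "(\<Sum>\<nu>\<in>{i..<Suc j}. of_int (k \<nu>) * ratio_prod 0 \<nu>) =
      (\<Sum>\<nu>\<in>{i..j}. of_int (k \<nu>) * ratio_prod i \<nu>) * ratio_prod 0 i"
    unfolding sum_distrib_right atLeastLessThanSuc_atLeastAtMost
  proof (rule sum.cong)
    fix \<nu> assume "\<nu> \<in> {i..j}"
    then show "of_int (k \<nu>) * ratio_prod 0 \<nu> = of_int (k \<nu>) * ratio_prod i \<nu> * ratio_prod 0 i"
      using ratio_prod_split[of 0 i \<nu>] by simp
  qed simp
  ultimately show ?thesis by (simp add: kij_eq)
qed

definition phase :: "nat \<Rightarrow> rat" where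
  "phase i = partial_sum i / (ratio_prod 0 i * of_int (beta (y i)))"

lemma partial_sum_phase: "i \<in> N \<Longrightarrow> partial_sum i = phase i * ratio_prod 0 i * of_int (beta (y i))"
  unfolding phase_def using ratio_prod_nonzero[of i 0] beta_nonzero[OF y_in_E] by simp

definition rho_prefix :: "nat \<Rightarrow> 'e \<Rightarrow> int" where
  "rho_prefix j = rho D bar y 0 j"

definition rho_letter :: "'e \<Rightarrow> 'e \<Rightarrow> int" where
  "rho_letter z e = (if e \<in> D then (if z = e then 1 else 0) - (if z = bar e then 1 else 0) else 0)"

lemma card_edges_Suc:
  assumes "i \<le> j"
  shows "card {\<mu>. i < \<mu> \<and> \<mu> \<le> Suc j \<and> y \<mu> = c} =
    card {\<mu>. i < \<mu> \<and> \<mu> \<le> j \<and> y \<mu> = c} + (if y (Suc j) = c then 1 else 0)"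
proof -
  have "finite {\<mu>. i < \<mu> \<and> \<mu> \<le> j \<and> y \<mu> = c}" by (rule finite_subset[of _ "{..j}"]) auto
  moreover have "{\<mu>. i < \<mu> \<and> \<mu> \<le> Suc j \<and> y \<mu> = c} =
      (if y (Suc j) = c then insert (Suc j) else id) {\<mu>. i < \<mu> \<and> \<mu> \<le> j \<and> y \<mu> = c}"
    using assms by (auto simp: le_Suc_eq)
  ultimately show ?thesis by simp
qed

lemma rho_Suc: "i \<le> j \<Longrightarrow> rho D bar y i (Suc j) e = rho D bar y i j e + rho_letter (y (Suc j)) e"
  unfolding rho_def rho_letter_def by (simp add: card_edges_Suc)

lemma rho_self: "rho D bar y i i e = 0"
  unfolding rho_def by (simp add: not_le[symmetric] conj_commute cong: conj_cong)

lemma rho_prefix_0: "rho_prefix 0 e = 0"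
  unfolding rho_prefix_def by (rule rho_self)

lemma rho_prefix_Suc: "rho_prefix (Suc j) e = rho_prefix j e + rho_letter (y (Suc j)) e"
  unfolding rho_prefix_def by (simp add: rho_Suc)

lemma rho_eq_diff: "i \<le> j \<Longrightarrow> rho D bar y i j e = rho_prefix j e - rho_prefix i e"
  by (induction j rule: dec_induct) (simp_all add: rho_self rho_Suc rho_prefix_Suc)

lemma rho_letter_bar: "z \<in> E \<Longrightarrow> rho_letter (bar z) e = - rho_letter z e"
  unfolding rho_letter_def using D_subset_E by (auto dest: bar_bar)

lemma prod_ratio_powi_rho_letter:
  assumes "z \<in> E"
  shows "(\<Prod>e\<in>D. ratio e powi rho_letter z e) = ratio z"
proof (cases "z \<in> D")
  case True
  then have "(\<Prod>e\<in>D. ratio e powi rho_letter z e) = (\<Prod>e\<in>D. if e = z then ratio e else 1)"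
    using in_D_iff D_subset_E by (intro prod.cong) (auto simp: rho_letter_def)
  then show ?thesis using True finite_D by simp
next
  case False
  then have "bar z \<in> D" using in_D_iff[OF assms] by blast
  have "z = bar e \<longleftrightarrow> e = bar z" if "e \<in> D" for e
    using that D_subset_E bar_bar[OF assms] bar_bar[of e] by auto
  then have "(\<Prod>e\<in>D. ratio e powi rho_letter z e) = (\<Prod>e\<in>D. if e = bar z then inverse (ratio e) else 1)"
    using False by (intro prod.cong) (auto simp: rho_letter_def)
  also have "\<dots> = inverse (ratio (bar z))" using \<open>bar z \<in> D\<close> finite_D by simp
  also have "\<dots> = ratio z" using ratio_bar[OF assms] by (rule inverse_unique)
  finally show ?thesis .
qed

lemma ratio_prod_0_eq: "j \<le> n \<Longrightarrow> ratio_prod 0 j = (\<Prod>e\<in>D. ratio e powi rho_prefix j e)"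
proof (induction j)
  case 0
  then show ?case by (simp add: rho_prefix_0)
next
  case (Suc j)
  have "(\<Prod>e\<in>D. ratio e powi rho_prefix (Suc j) e) =
      (\<Prod>e\<in>D. ratio e powi rho_prefix j e) * (\<Prod>e\<in>D. ratio e powi rho_letter (y (Suc j)) e)"
    unfolding rho_prefix_Suc prod.distrib[symmetric]
    by (intro prod.cong) (use D_subset_E ratio_nonzero in \<open>auto simp: power_int_add\<close>)
  then show ?case
    using Suc prod_ratio_powi_rho_letter[OF y_in_E, of "Suc j"] by (simp add: ratio_prod_Suc)
qed

lemma ratio_prod_0_cong: "rho_prefix i = rho_prefix j \<Longrightarrow> i \<le> n \<Longrightarrow> j \<le> n \<Longrightarrow> ratio_prod 0 i = ratio_prod 0 j"
  by (simp add: ratio_prod_0_eq)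


section \<open>The relation \<open>\<sim>\<^sub>C\<close> in terms of phases\<close>

text \<open>\<open>partner i j\<close> is \<open>i \<sim>\<^sub>C j\<close> (lemma \<open>simC_iff_partner\<close>), \<open>phase i\<close> is the \<open>u\<^sub>i\<close> of the proof idea,
  and the \<open>\<approx>\<close>-class of an index with a partner is its \<open>alike\<close>-class (lemma \<open>cls_eq\<close>).\<close>

definition partner :: "nat \<Rightarrow> nat \<Rightarrow> bool" where
  "partner i j \<longleftrightarrow> y i = bar (y j) \<and> rho_prefix i = rho_prefix (j - 1) \<and>
     rho_prefix (i - 1) = rho_prefix j \<and> phase i - phase j \<in> \<int>"

definition alike :: "nat \<Rightarrow> nat \<Rightarrow> bool" where
  "alike i j \<longleftrightarrow> y i = y j \<and> rho_prefix i = rho_prefix j \<and>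
     rho_prefix (i - 1) = rho_prefix (j - 1) \<and> phase i - phase j \<in> \<int>"

lemma rho_prefix_pred: "i \<in> N \<Longrightarrow> rho_prefix i e = rho_prefix (i - 1) e + rho_letter (y i) e"
  using rho_prefix_Suc[of "i - 1"] by simp

lemma rho_prefix_pred_eq:
  assumes "i \<in> N" "j \<in> N" "y i = bar (y j)" "rho_prefix i = rho_prefix (j - 1)"
  shows "rho_prefix (i - 1) = rho_prefix j"
proof
  fix e
  have "rho_prefix (i - 1) e = rho_prefix (j - 1) e - rho_letter (bar (y j)) e"
    using rho_prefix_pred[OF assms(1), of e] assms(3,4) by simp
  then show "rho_prefix (i - 1) e = rho_prefix j e"
    using rho_prefix_pred[OF assms(2), of e] rho_letter_bar[OF y_in_E[OF assms(2)]] by simp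
qed

lemma kij_partner:
  assumes "i < j" "i \<in> N" "j \<in> N" "y i = bar (y j)" "rho_prefix i = rho_prefix (j - 1)"
  shows "kij alpha beta k y i (j - 1) = (phase j - phase i) * of_int (beta (y i))"
proof -
  have yj: "y j \<in> E" using y_in_E assms(3) by simp
  have "ratio_prod 0 j = ratio_prod 0 (j - 1) * ratio (y j)"
    using ratio_prod_Suc[of 0 "j - 1"] assms by simp
  also have "ratio_prod 0 (j - 1) = ratio_prod 0 i"
    using ratio_prod_0_cong[of i "j - 1"] assms by simp
  finally have "partial_sum j = phase j * ratio_prod 0 i * of_int (beta (y i))"
    using partial_sum_phase[OF assms(3)] ratio_mult_beta[OF yj] beta_bar[OF yj] assms(4)
    by (simp add: algebra_simps)
  moreover have "kij alpha beta k y i (j - 1) * ratio_prod 0 i = partial_sum j - partial_sum i"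
    using kij_ratio_prod[of i "j - 1"] assms by simp
  ultimately have "kij alpha beta k y i (j - 1) * ratio_prod 0 i =
      (phase j - phase i) * of_int (beta (y i)) * ratio_prod 0 i"
    using partial_sum_phase[OF assms(2)] by (simp add: algebra_simps)
  then show ?thesis using ratio_prod_nonzero assms by simp
qed

lemma kij_partner_iff:
  assumes "i < j" "i \<in> N" "j \<in> N" "y i = bar (y j)" "rho_prefix i = rho_prefix (j - 1)"
  shows "(\<exists>m::int. kij alpha beta k y i (j - 1) = of_int (beta (y i) * m)) \<longleftrightarrow> phase i - phase j \<in> \<int>"
proof -
  have "beta (y i) \<noteq> 0" using beta_nonzero y_in_E assms(2) by simp
  then have "(\<exists>m::int. kij alpha beta k y i (j - 1) = of_int (beta (y i) * m)) \<longleftrightarrow> phase j - phase i \<in> \<int>"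
    unfolding kij_partner[OF assms] by (auto simp: mult.commute elim!: Ints_cases)
  also have "\<dots> \<longleftrightarrow> phase i - phase j \<in> \<int>"
    using Ints_minus by fastforce
  finally show ?thesis .
qed

lemma partner_sym: "j \<in> N \<Longrightarrow> partner i j \<Longrightarrow> partner j i"
  unfolding partner_def using bar_bar[OF y_in_E] Ints_minus by fastforce

lemma simC_cond_iff_partner:
  assumes "i < j" "i \<in> N" "j \<in> N" "y i = bar (y j)"
  shows "simC_cond D bar alpha beta k y i j \<longleftrightarrow> partner i j"
proof -
  have "rho D bar y i (j - 1) = (\<lambda>_. 0) \<longleftrightarrow> rho_prefix i = rho_prefix (j - 1)"
    using assms(1) by (auto simp: fun_eq_iff rho_eq_diff)
  then show ?thesis unfolding simC_cond_def partner_def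
    using kij_partner_iff[OF assms] rho_prefix_pred_eq[OF assms(2-4)] assms(4) by blast
qed

lemma simC_iff_partner: "simC D bar alpha beta n k y i j \<longleftrightarrow> i \<in> N \<and> j \<in> N \<and> partner i j"
proof (cases "i \<in> N \<and> j \<in> N \<and> y i = bar (y j)")
  case True
  then have "i \<noteq> j" using bar_neq[OF y_in_E[of j]] by auto
  then consider "i < j" | "j < i" by linarith
  then show ?thesis
  proof cases
    case 1
    then show ?thesis unfolding simC_def using simC_cond_iff_partner True by auto
  next
    case 2
    have "y j = bar (y i)" using True bar_bar[OF y_in_E[of j]] by simp
    then have "simC_cond D bar alpha beta k y j i \<longleftrightarrow> partner i j"
      using simC_cond_iff_partner[OF 2] True partner_sym by blast
    then show ?thesis unfolding simC_def using True 2 by simp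
  qed
next
  case False
  then show ?thesis unfolding simC_def partner_def by blast
qed

lemma alike_refl: "alike i i"
  unfolding alike_def by simp

lemma alike_sym: "alike i j \<Longrightarrow> alike j i"
  unfolding alike_def using Ints_minus by fastforce

lemma alike_trans: "alike i j \<Longrightarrow> alike j l \<Longrightarrow> alike i l"
  unfolding alike_def using Ints_add by fastforce

lemma partner_partner: "l \<in> N \<Longrightarrow> j \<in> N \<Longrightarrow> partner i l \<Longrightarrow> partner l j \<Longrightarrow> alike i j"
  unfolding partner_def alike_def using bar_bar[OF y_in_E] Ints_add by fastforce

lemma alike_partner: "alike i j \<Longrightarrow> partner j l \<Longrightarrow> partner i l"
  unfolding partner_def alike_def using Ints_add by fastforce

lemma partner_alike: "partner i j \<Longrightarrow> alike j l \<Longrightarrow> partner i l"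
  unfolding partner_def alike_def using Ints_add by fastforce

section \<open>The alphabet \<open>\<Sigma>\<^sub>w\<close>\<close>

definition has_partner :: "nat \<Rightarrow> bool" where
  "has_partner i \<longleftrightarrow> (\<exists>l\<in>N. partner i l)"

abbreviation cl :: "nat \<Rightarrow> nat set" where
  "cl \<equiv> cls D bar alpha beta n k y"

abbreviation sb :: "nat set \<times> bool \<Rightarrow> nat set \<times> bool" where
  "sb \<equiv> sigma_bar D bar alpha beta n k y"

definition cl_letter :: "nat \<Rightarrow> nat set \<times> bool" where
  "cl_letter i = (cl i, False)"

lemma cls_eq:
  assumes "i \<in> N"
  shows "cl i = (if has_partner i then {j\<in>N. alike i j} else {i})"
proof (cases "has_partner i")
  case True
  then obtain l where l: "l \<in> N" "partner i l" unfolding has_partner_def by blast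
  have "j \<in> cl i \<longleftrightarrow> j \<in> N \<and> alike i j" for j
  proof
    assume "j \<in> cl i"
    then show "j \<in> N \<and> alike i j"
      unfolding cls_def approxC_def simC_iff_partner using partner_partner alike_refl by blast
  next
    assume j: "j \<in> N \<and> alike i j"
    then have "partner l j" using partner_alike partner_sym[OF l] by blast
    then show "j \<in> cl i" unfolding cls_def approxC_def simC_iff_partner using assms l j by blast
  qed
  then show ?thesis using True by auto
next
  case False
  then show ?thesis unfolding cls_def approxC_def simC_iff_partner has_partner_def using assms by auto
qed

lemma in_cls: "i \<in> N \<Longrightarrow> i \<in> cl i"
  unfolding cls_def approxC_def by simp

lemma cls_eq_imp_alike:
  assumes "i \<in> N" "j \<in> N" "cl i = cl j"
  shows "alike i j"
proof -
  have "j \<in> cl i" using in_cls[of j] assms by simp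
  then show ?thesis using cls_eq[OF assms(1)] alike_refl by (simp split: if_splits)
qed

lemma has_partner_alike: "alike i j \<Longrightarrow> has_partner i \<Longrightarrow> has_partner j"
  unfolding has_partner_def using alike_partner alike_sym by blast

lemma cls_eq_if_alike:
  assumes "i \<in> N" "j \<in> N" "has_partner i" "alike i j"
  shows "cl i = cl j"
proof -
  have "has_partner j" using has_partner_alike assms by blast
  moreover have "{l\<in>N. alike i l} = {l\<in>N. alike j l}" using assms alike_sym alike_trans by blast
  ultimately show ?thesis using cls_eq assms by simp
qed

lemma sigma_bar_partner:
  assumes "i \<in> N" "j \<in> N" "partner i j"
  shows "sb (cl_letter i) = cl_letter j"
proof -
  let ?j' = "SOME j'. \<exists>i'\<in>cl i. simC D bar alpha beta n k y i' j'"
  have ex: "\<exists>j'. \<exists>i'\<in>cl i. simC D bar alpha beta n k y i' j'"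
    using assms cls_eq[OF assms(1)] alike_refl simC_iff_partner unfolding has_partner_def by auto
  then obtain i' where i': "i' \<in> cl i" "simC D bar alpha beta n k y i' ?j'"
    by (rule someI_ex[THEN bexE])
  then have "?j' \<in> N" "partner i' ?j'" "i' \<in> N" using simC_iff_partner by auto
  moreover have "has_partner i" using assms unfolding has_partner_def by blast
  then have "alike i i'" using i'(1) cls_eq[OF assms(1)] by simp
  ultimately have "partner i ?j'" using alike_partner by blast
  moreover have "partner j i" using partner_sym assms by blast
  ultimately have "alike j ?j'" using partner_partner assms \<open>?j' \<in> N\<close> by blast
  moreover have "has_partner j" using \<open>partner j i\<close> assms unfolding has_partner_def by blast
  ultimately have "cl ?j' = cl j" using cls_eq_if_alike \<open>?j' \<in> N\<close> assms by metis
  then show ?thesis using ex unfolding sigma_bar_def cl_letter_def by auto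
qed

lemma sigma_bar_no_partner:
  assumes "i \<in> N" "\<not> has_partner i"
  shows "sb (cl_letter i) = (cl i, True)"
proof -
  have "\<not> (\<exists>i'\<in>cl i. \<exists>j. simC D bar alpha beta n k y i' j)"
    using assms cls_eq[OF assms(1)] simC_iff_partner unfolding has_partner_def by auto
  then show ?thesis unfolding sigma_bar_def cl_letter_def by simp
qed

lemma sigma_bar_sigma_bar_letter:
  assumes "i \<in> N"
  shows "sb (sb (cl_letter i)) = cl_letter i"
proof (cases "has_partner i")
  case True
  then obtain j where j: "j \<in> N" "partner i j" unfolding has_partner_def by blast
  then have "sb (cl_letter i) = cl_letter j" using sigma_bar_partner assms by blast
  moreover have "sb (cl_letter j) = cl_letter i"
    using sigma_bar_partner[OF j(1) assms partner_sym[OF j]] .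
  ultimately show ?thesis by simp
next
  case False
  then show ?thesis using sigma_bar_no_partner[OF assms] by (simp add: sigma_bar_def cl_letter_def)
qed

lemma sigma_bar_exists_letter:
  assumes "\<not> snd x" "\<exists>i\<in>fst x. \<exists>j. simC D bar alpha beta n k y i j"
  shows "\<exists>j\<in>N. sb x = cl_letter j"
proof -
  let ?j = "SOME j. \<exists>i\<in>fst x. simC D bar alpha beta n k y i j"
  have "\<exists>i\<in>fst x. simC D bar alpha beta n k y i ?j"
    using someI_ex[of "\<lambda>j. \<exists>i\<in>fst x. simC D bar alpha beta n k y i j"] assms(2) by blast
  then have "?j \<in> N" using simC_iff_partner by blast
  moreover have "sb x = cl_letter ?j" using assms unfolding sigma_bar_def cl_letter_def by simp
  ultimately show ?thesis by blast
qed

text \<open>On values of its type outside \<open>\<Sigma>\<^sub>w\<close>, \<open>sb\<close> need not be an involution.\<close>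

lemma sigma_bar_image_involutive: "sb (sb (sb (sb x))) = sb (sb x)"
proof -
  let ?cond = "\<exists>i\<in>fst x. \<exists>j. simC D bar alpha beta n k y i j"
  have "sb (sb x) = x \<or> (\<exists>j\<in>N. sb x = cl_letter j \<or> sb (sb x) = cl_letter j)"
  proof (cases ?cond)
    case True
    then show ?thesis
      using sigma_bar_exists_letter[of x] sigma_bar_exists_letter[of "(fst x, False)"]
      by (cases "snd x") (auto simp: sigma_bar_def)
  next
    case False
    then show ?thesis by (cases x) (auto simp: sigma_bar_def)
  qed
  then show ?thesis using sigma_bar_sigma_bar_letter by auto
qed

lemma partner_if_letter_eq_sigma_bar:
  assumes "j \<in> N" "l \<in> N" "cl_letter l = sb (cl_letter j)"
  shows "partner j l"
proof (cases "has_partner j")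
  case True
  then obtain l' where "l' \<in> N" "partner j l'" unfolding has_partner_def by blast
  then show ?thesis
    using assms sigma_bar_partner cls_eq_imp_alike alike_sym partner_alike
    unfolding cl_letter_def by (metis prod.inject)
next
  case False
  then show ?thesis using assms sigma_bar_no_partner unfolding cl_letter_def by simp
qed


section \<open>Subfactorizations and the stack algorithm\<close>

definition prefix_word :: "nat \<Rightarrow> ('v, 'e) letter list" where
  "prefix_word p = letters (fact_word tau a0 (k 0) (map (\<lambda>i. (y i, k i)) [1..<p+1]))"

definition sub_word :: "(nat \<Rightarrow> int) \<Rightarrow> nat list \<Rightarrow> ('v, 'e) syl list" where
  "sub_word e qs = fact_word tau a0 (e 0) (map (\<lambda>l. (y (qs ! l), e (Suc l))) [0..<length qs])"

definition hat_exp :: "nat list \<Rightarrow> nat \<Rightarrow> nat \<Rightarrow> int" where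
  "hat_exp qs p l = \<lfloor>kij alpha beta k y (hat_start qs l) (hat_end p qs l)\<rfloor>"

definition hat_word :: "nat list \<Rightarrow> nat \<Rightarrow> ('v, 'e) syl list" where
  "hat_word qs p = sub_word (hat_exp qs p) qs"

text \<open>\<open>hat_word qs p\<close> without its last vertex syllable; only that syllable depends on \<open>p\<close>, so
  \<open>p = 0\<close> is an arbitrary choice.\<close>

definition hat_body :: "nat list \<Rightarrow> ('v, 'e) letter list" where
  "hat_body qs = letters (sub_word ((hat_exp qs 0)(length qs := 0)) qs)"

lemma prefix_word_Suc:
  "prefix_word (Suc p) = prefix_word p @ [ge (y (Suc p))] @ powl (vertex (Suc p)) (k (Suc p))"
proof -
  have "[1..<Suc p + 1] = [1..<p+1] @ [Suc p]" by simp
  then show ?thesis unfolding prefix_word_def by (simp add: fact_word_snoc vertex_def del: upt_Suc)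
qed

lemma sub_word_cong: "(\<And>l. l \<le> length qs \<Longrightarrow> e l = e' l) \<Longrightarrow> sub_word e qs = sub_word e' qs"
  unfolding sub_word_def by (auto intro!: arg_cong2[where f = "fact_word tau a0"])

lemma sub_word_cong_edges:
  "length qs = length qs' \<Longrightarrow> (\<And>l. l < length qs \<Longrightarrow> y (qs ! l) = y (qs' ! l)) \<Longrightarrow> sub_word e qs = sub_word e qs'"
  unfolding sub_word_def by (auto intro!: arg_cong2[where f = "fact_word tau a0"])

lemma sub_word_snoc: "sub_word e (qs @ [q]) = sub_word e qs @ SE (y q) # pw (tau (y q)) (e (Suc (length qs)))"
proof -
  have edges: "map (\<lambda>l. (y ((qs @ [q]) ! l), e (Suc l))) [0..<length qs] =
      map (\<lambda>l. (y (qs ! l), e (Suc l))) [0..<length qs]"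
    by (rule map_cong) (simp_all add: nth_append)
  show ?thesis unfolding sub_word_def by (simp add: fact_word_snoc edges)
qed

lemma sub_word_last:
  assumes "0 \<notin> set qs"
  shows "letters (sub_word e qs) =
    letters (sub_word (e(length qs := 0)) qs) @ powl (vertex (hat_start qs (length qs))) (e (length qs))"
proof (cases qs rule: rev_cases)
  case Nil
  then show ?thesis by (simp add: sub_word_def fact_word_Nil hat_start_def vertex_def)
next
  case (snoc qs' q)
  have "sub_word e qs' = sub_word (e(length qs := 0)) qs'" by (rule sub_word_cong) (simp add: snoc)
  moreover have "q \<noteq> 0" using assms snoc by auto
  ultimately show ?thesis using snoc by (simp add: sub_word_snoc vertex_def hat_start_def)
qed

lemma hat_word_split:
  assumes "0 \<notin> set qs"
  shows "letters (hat_word qs p) =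
    hat_body qs @ powl (vertex (hat_start qs (length qs))) (hat_exp qs p (length qs))"
proof -
  have "sub_word ((hat_exp qs p)(length qs := 0)) qs = sub_word ((hat_exp qs 0)(length qs := 0)) qs"
    by (rule sub_word_cong) (simp add: hat_exp_def hat_end_def)
  then show ?thesis unfolding hat_word_def hat_body_def using sub_word_last[OF assms, of "hat_exp qs p"] by simp
qed

lemma hat_body_snoc:
  assumes "0 \<notin> set qs"
  shows "hat_body (qs @ [q]) =
    hat_body qs @ powl (vertex (hat_start qs (length qs))) (hat_exp qs (q - 1) (length qs)) @ [ge (y q)]"
proof -
  have "sub_word ((hat_exp (qs @ [q]) 0)(length (qs @ [q]) := 0)) qs = sub_word (hat_exp qs (q - 1)) qs"
    by (rule sub_word_cong) (simp add: hat_exp_def hat_start_snoc hat_end_snoc)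
  then show ?thesis
    using hat_word_split[OF assms, of "q - 1"] by (simp add: hat_body_def sub_word_snoc hat_word_def)
qed

lemma hat_word_eq:
  "hat_word qs p = fact_word tau a0 (hat_exp qs p 0) (map (\<lambda>l. (y (qs ! l), hat_exp qs p (Suc l))) [0..<length qs])"
  unfolding hat_word_def sub_word_def ..

lemma kij_self: "kij alpha beta k y i i = of_int (k i)"
  by (simp add: kij_eq)

text \<open>A closed segment \<open>w\<^sub>i\<^sub>,\<^sub>j\<close> is a loop with \<open>\<rho> = 0\<close> and integral \<open>k\<^sub>i\<^sub>,\<^sub>j\<close>; the floor in \<open>hat_exp\<close> only
  matters off closed segments. A stack state is the invariant of the stack algorithm after reading
  \<open>[1] \<cdots> [p]\<close>, with the stack listed bottom first.\<close>

definition closed_segment :: "nat \<Rightarrow> nat \<Rightarrow> bool" where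
  "closed_segment i j \<longleftrightarrow> vertex j = vertex i \<and> rho_prefix j = rho_prefix i \<and> kij alpha beta k y i j \<in> \<int>"

definition admissible :: "nat \<Rightarrow> nat list \<Rightarrow> bool" where
  "admissible p qs \<longleftrightarrow> sorted_wrt (<) qs \<and> set qs \<subseteq> {1..p} \<and>
     (\<forall>l \<le> length qs. closed_segment (hat_start qs l) (hat_end p qs l))"

definition stack_state :: "nat \<Rightarrow> nat list \<Rightarrow> bool" where
  "stack_state p qs \<longleftrightarrow> admissible p qs \<and> FG (prefix_word p) (letters (hat_word qs p))"

lemma admissible_segment:
  "admissible p qs \<Longrightarrow> l \<le> length qs \<Longrightarrow> closed_segment (hat_start qs l) (hat_end p qs l)"
  unfolding admissible_def by blast

lemma closed_segment_self: "closed_segment i i"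
  unfolding closed_segment_def by (simp add: kij_self)

lemma stack_state_0: "stack_state 0 []"
  unfolding stack_state_def admissible_def prefix_word_def hat_word_def sub_word_def hat_exp_def
  by (simp add: closed_segment_self hat_start_def hat_end_def kij_self fact_word_Nil)

lemma stack_state_push:
  assumes "stack_state p qs" and "p < n"
  shows "stack_state (Suc p) (qs @ [Suc p])"
proof -
  have adm: "admissible p qs" and fg: "FG (prefix_word p) (letters (hat_word qs p))"
    using assms(1) unfolding stack_state_def by blast+
  then have "admissible (Suc p) (qs @ [Suc p])"
    unfolding admissible_def
    by (auto simp: sorted_wrt_append le_Suc_eq hat_start_snoc hat_end_snoc hat_start_snoc_last
        hat_end_snoc_last closed_segment_self)
  moreover have "0 \<notin> set qs" using adm unfolding admissible_def by auto
  then have "letters (hat_word (qs @ [Suc p]) (Suc p)) =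
      letters (hat_word qs p) @ [ge (y (Suc p))] @ powl (vertex (Suc p)) (k (Suc p))"
    using hat_word_split[of "qs @ [Suc p]" "Suc p"] hat_word_split[of qs p]
    by (simp add: hat_body_snoc hat_exp_def hat_start_snoc_last hat_end_snoc_last kij_self)
  then have "FG (prefix_word (Suc p)) (letters (hat_word (qs @ [Suc p]) (Suc p)))"
    unfolding prefix_word_Suc using FG_append[OF fg FG_refl] by simp
  ultimately show ?thesis unfolding stack_state_def by blast
qed

text \<open>Cancelling \<open>y\<^sub>q\<close> against \<open>y\<^sub>p\<^sub>+\<^sub>1 = bar y\<^sub>q\<close> merges the segments before \<open>q\<close> and after \<open>p\<close>.\<close>

lemma kij_pop:
  assumes "h \<le> q - 1" "1 \<le> q" "q \<le> p" "Suc p \<le> n"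
    and "rho_prefix h = rho_prefix (q - 1)" "rho_prefix q = rho_prefix p" "y (Suc p) = bar (y q)"
    and "kij alpha beta k y q p = of_int (beta (y q) * m)"
  shows "kij alpha beta k y h (Suc p) =
    kij alpha beta k y h (q - 1) + of_int (alpha (y q) * m) + of_int (k (Suc p))"
proof -
  have yq: "y q \<in> E" using y_in_E assms by simp
  have ratio_q: "ratio_prod 0 q = ratio_prod 0 h * ratio (y q)"
    using ratio_prod_Suc[of 0 "q - 1"] ratio_prod_0_cong[of h "q - 1"] assms by simp
  have "ratio_prod 0 (Suc p) = ratio_prod 0 q * ratio (y (Suc p))"
    using ratio_prod_Suc[of 0 p] ratio_prod_0_cong[of q p] assms by simp
  then have ratio_Suc_p: "ratio_prod 0 (Suc p) = ratio_prod 0 h"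
    using ratio_q ratio_bar[OF yq] assms(7) by (simp add: algebra_simps)
  have "kij alpha beta k y h (Suc p) * ratio_prod 0 h =
      kij alpha beta k y h (q - 1) * ratio_prod 0 h + kij alpha beta k y q p * ratio_prod 0 q
      + of_int (k (Suc p)) * ratio_prod 0 (Suc p)"
    using kij_ratio_prod[of h "Suc p"] kij_ratio_prod[of h "q - 1"] kij_ratio_prod[of q p] assms
    by (simp add: partial_sum_def)
  also have "\<dots> = (kij alpha beta k y h (q - 1) + of_int (alpha (y q) * m) + of_int (k (Suc p))) * ratio_prod 0 h"
    using assms(8) ratio_q ratio_Suc_p ratio_mult_beta[OF yq] by (simp add: algebra_simps)
  finally show ?thesis using ratio_prod_nonzero[of h 0] assms by simp
qed

lemma hat_exp_eq: "kij alpha beta k y (hat_start qs l) (hat_end p qs l) = of_int z \<Longrightarrow> hat_exp qs p l = z"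
  unfolding hat_exp_def by simp

lemma admissible_hat_exp:
  assumes "admissible p qs" and "l \<le> length qs"
  shows "of_int (hat_exp qs p l) = kij alpha beta k y (hat_start qs l) (hat_end p qs l)"
  using admissible_segment[OF assms] unfolding closed_segment_def hat_exp_def by (auto elim!: Ints_cases)

lemma admissible_snocD:
  assumes "admissible p (qs @ [q])"
  shows "q \<in> {1..p}" and "hat_start qs (length qs) \<le> q - 1"
    and "closed_segment (hat_start qs (length qs)) (q - 1)" and "closed_segment q p"
proof -
  have sorted: "sorted_wrt (<) (qs @ [q])" and range: "set (qs @ [q]) \<subseteq> {1..p}"
    and segs: "\<forall>l \<le> Suc (length qs). closed_segment (hat_start (qs @ [q]) l) (hat_end p (qs @ [q]) l)"
    using assms unfolding admissible_def by auto
  show "q \<in> {1..p}" using range by auto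
  show "hat_start qs (length qs) \<le> q - 1"
  proof (cases "qs = []")
    case False
    then have "last qs < q" using sorted by (simp add: sorted_wrt_append)
    then show ?thesis using False by (simp add: hat_start_def last_conv_nth)
  qed (simp add: hat_start_def)
  show "closed_segment (hat_start qs (length qs)) (q - 1)"
    using segs[rule_format, of "length qs"] by (simp add: hat_start_snoc hat_end_snoc hat_end_def)
  show "closed_segment q p"
    using segs[rule_format, of "Suc (length qs)"] by (simp add: hat_start_snoc_last hat_end_snoc_last)
qed

lemma admissible_butlast:
  assumes adm: "admissible p (qs @ [q])" and "closed_segment (hat_start qs (length qs)) p'" and "p \<le> p'"
  shows "admissible p' qs"
  unfolding admissible_def
proof (intro conjI allI impI)
  have sorted: "sorted_wrt (<) (qs @ [q])" and range: "set (qs @ [q]) \<subseteq> {1..p}"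
    and segs: "\<forall>l \<le> Suc (length qs). closed_segment (hat_start (qs @ [q]) l) (hat_end p (qs @ [q]) l)"
    using adm unfolding admissible_def by auto
  show "sorted_wrt (<) qs" using sorted by (simp add: sorted_wrt_append)
  show "set qs \<subseteq> {1..p'}" using range \<open>p \<le> p'\<close> by auto
  fix l assume "l \<le> length qs"
  then consider "l < length qs" | "l = length qs" by linarith
  then show "closed_segment (hat_start qs l) (hat_end p' qs l)"
  proof cases
    case 1
    then show ?thesis using segs[rule_format, of l] by (simp add: hat_start_snoc hat_end_def nth_append)
  qed (use assms(2) in \<open>simp add: hat_end_def\<close>)
qed

lemma admissible_pop:
  assumes adm: "admissible p (qs @ [q])" and "p < n" and "partner q (Suc p)"
  obtains m where "admissible (Suc p) qs"
    and "hat_exp (qs @ [q]) p (Suc (length qs)) = beta (y q) * m"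
    and "hat_exp qs (Suc p) (length qs) = hat_exp qs (q - 1) (length qs) + alpha (y q) * m + k (Suc p)"
proof -
  let ?h = "hat_start qs (length qs)"
  note snoc = admissible_snocD[OF adm]
  have q: "q \<in> N" "1 \<le> q" "q \<le> p" using snoc(1) \<open>p < n\<close> by auto
  have yq: "y (Suc p) = bar (y q)" and rho: "rho_prefix q = rho_prefix p" "rho_prefix (q - 1) = rho_prefix (Suc p)"
    using \<open>partner q (Suc p)\<close> bar_bar[OF y_in_E[of "Suc p"]] \<open>p < n\<close> unfolding partner_def by auto
  obtain m where m: "kij alpha beta k y q p = of_int (beta (y q) * m)"
    using kij_partner_iff[of q "Suc p"] \<open>partner q (Suc p)\<close> q \<open>p < n\<close> unfolding partner_def by auto
  obtain z where z: "kij alpha beta k y ?h (q - 1) = of_int z"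
    using snoc(3) unfolding closed_segment_def by (auto elim: Ints_cases)
  have rho_h: "rho_prefix ?h = rho_prefix (q - 1)"
    using snoc(3) unfolding closed_segment_def by simp
  have merged: "kij alpha beta k y ?h (Suc p) = of_int (z + alpha (y q) * m + k (Suc p))"
    using kij_pop[OF snoc(2) q(2,3) _ rho_h rho(1) yq m] z \<open>p < n\<close> by simp
  have "vertex (Suc p) = iota (y q)"
    using yq tau_bar[OF y_in_E[OF q(1)]] by (simp add: vertex_def)
  also have "\<dots> = vertex ?h"
    using iota_y[OF q(1)] snoc(3) unfolding closed_segment_def by simp
  finally have "closed_segment ?h (Suc p)"
    using rho_h rho(2) merged unfolding closed_segment_def by simp
  then have "admissible (Suc p) qs"
    using admissible_butlast[OF adm] by simp
  moreover have "hat_exp (qs @ [q]) p (Suc (length qs)) = beta (y q) * m"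
    using m by (intro hat_exp_eq) (simp add: hat_start_snoc_last hat_end_snoc_last)
  moreover have "hat_exp qs (q - 1) (length qs) = z"
    and "hat_exp qs (Suc p) (length qs) = z + alpha (y q) * m + k (Suc p)"
    using z merged by (simp_all add: hat_exp_eq hat_end_def)
  ultimately show ?thesis using that[of m] by simp
qed

lemma stack_state_pop:
  assumes "stack_state p (qs @ [q])" and "p < n" and "partner q (Suc p)"
  shows "stack_state (Suc p) qs"
proof -
  have adm: "admissible p (qs @ [q])" and fg: "FG (prefix_word p) (letters (hat_word (qs @ [q]) p))"
    using assms(1) unfolding stack_state_def by blast+
  obtain m where adm': "admissible (Suc p) qs"
    and exp_q: "hat_exp (qs @ [q]) p (Suc (length qs)) = beta (y q) * m"
    and exp_h: "hat_exp qs (Suc p) (length qs) = hat_exp qs (q - 1) (length qs) + alpha (y q) * m + k (Suc p)"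
    using admissible_pop[OF adm assms(2,3)] .
  let ?c = "vertex (hat_start qs (length qs))"
  have q: "q \<in> N" and "0 \<notin> set qs" using adm assms(2) unfolding admissible_def by auto
  have yq: "y (Suc p) = bar (y q)"
    using assms(3) bar_bar[OF y_in_E[of "Suc p"]] assms(2) unfolding partner_def by auto
  have "vertex (Suc p) = ?c"
    using admissible_segment[OF adm', of "length qs"] by (simp add: closed_segment_def hat_end_def)
  moreover have "vertex (Suc p) = iota (y q)"
    using yq tau_bar[OF y_in_E[OF q]] by (simp add: vertex_def)
  ultimately have c: "iota (y q) = ?c" "vertex (Suc p) = ?c" by simp_all
  have "prefix_word (Suc p) = prefix_word p @ [ge (bar (y q))] @ powl ?c (k (Suc p))"
    using prefix_word_Suc yq c by simp
  also have "FG \<dots> (hat_body qs @ powl ?c (hat_exp qs (q - 1) (length qs)) @ pinch_word (y q) (beta (y q) * m)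
      @ powl ?c (k (Suc p)))"
    using FG_append[OF fg FG_refl] hat_word_split[of "qs @ [q]" p] hat_body_snoc \<open>0 \<notin> set qs\<close> q exp_q
    by (simp add: hat_start_snoc_last vertex_def)
  also have "FG \<dots> (hat_body qs @ powl ?c (hat_exp qs (Suc p) (length qs)))"
    using FG_context[OF FG_pinch_merge[OF y_in_E[OF q]], of "hat_body qs" _ _ _ "[]"] c exp_h by simp
  also have "\<dots> = letters (hat_word qs (Suc p))"
    using hat_word_split \<open>0 \<notin> set qs\<close> by simp
  finally show ?thesis using adm' unfolding stack_state_def by blast
qed


definition stack :: "nat \<Rightarrow> nat list" where
  "stack p = foldl (stack_push_by cl_letter sb) [] [1..<Suc p]"

lemma stack_state_stack: "p \<le> n \<Longrightarrow> stack_state p (rev (stack p))"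
proof (induction p)
  case 0
  then show ?case by (simp add: stack_def stack_state_0)
next
  case (Suc p)
  then have IH: "stack_state p (rev (stack p))" and "p < n" by simp_all
  have stack_Suc: "stack (Suc p) = stack_push_by cl_letter sb (stack p) (Suc p)"
    unfolding stack_def by simp
  show ?case
  proof (cases "stack p")
    case Nil
    then show ?thesis using stack_state_push[OF IH \<open>p < n\<close>] stack_Suc
      by (simp add: stack_push_by_def)
  next
    case (Cons j js)
    then have "j \<in> N"
      using IH \<open>p < n\<close> unfolding stack_state_def admissible_def by auto
    show ?thesis
    proof (cases "cl_letter (Suc p) = sb (cl_letter j)")
      case True
      then have "partner j (Suc p)"
        using partner_if_letter_eq_sigma_bar[OF \<open>j \<in> N\<close>] \<open>p < n\<close> by simp
      then show ?thesis
        using stack_state_pop[of p "rev js" j] IH \<open>p < n\<close> stack_Suc Cons True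
        by (simp add: stack_push_by_def)
    next
      case False
      then show ?thesis using stack_state_push[OF IH \<open>p < n\<close>] stack_Suc Cons
        by (simp add: stack_push_by_def)
    qed
  qed
qed

text \<open>Free reduction is confluent, so the stack ends with the letters of the given reduced word.\<close>

lemma letters_stack:
  assumes range: "set idx \<subseteq> N"
    and red: "freely_reduced sb (map cl_letter idx)"
    and eq: "free_eq sb (map cl_letter [1..<n+1]) (map cl_letter idx)"
  shows "map cl_letter (rev (stack n)) = map cl_letter idx"
proof -
  have letters_fixed: "map (\<lambda>x. sb (sb x)) (map cl_letter xs) = map cl_letter xs" if "set xs \<subseteq> N" for xs
    using that sigma_bar_sigma_bar_letter by auto
  have fixed_n: "map (\<lambda>x. sb (sb x)) (map cl_letter [1..<n+1]) = map cl_letter [1..<n+1]"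
    by (rule letters_fixed) auto
  have "stack_reduce sb (map (\<lambda>x. sb (sb x)) (map cl_letter [1..<n+1])) =
      stack_reduce sb (map (\<lambda>x. sb (sb x)) (map cl_letter idx))"
    by (rule stack_reduce_free_eq[OF _ sigma_bar_image_involutive eq]) simp
  then have "stack_reduce sb (map cl_letter [1..<n+1]) = stack_reduce sb (map cl_letter idx)"
    unfolding fixed_n letters_fixed[OF range] .
  moreover have "stack_reduce sb (map cl_letter [1..<n+1]) = map cl_letter (stack n)"
    unfolding stack_reduce_def stack_def using map_foldl_stack_push_by[of cl_letter sb "[]"] by simp
  ultimately have "map cl_letter (stack n) = rev (map cl_letter idx)"
    using stack_reduce_freely_reduced[OF red] by simp
  then show ?thesis by (metis rev_map rev_rev_ident)
qed


section \<open>From the stack to the chosen indices\<close>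

text \<open>Exponents of a subfactorization in terms of phases \<open>\<phi> t\<close> attached to its edges: a segment
  from \<open>qs ! (l - 1)\<close> to \<open>qs ! l - 1\<close> contributes the partial sums at both ends.\<close>

definition phase_exp :: "(nat \<Rightarrow> rat) \<Rightarrow> nat list \<Rightarrow> nat \<Rightarrow> rat" where
  "phase_exp \<phi> qs l =
     (if l < length qs then \<phi> l * of_int (alpha (y (qs ! l))) else partial_sum (Suc n) / ratio_prod 0 n) -
     (if l = 0 then 0 else \<phi> (l - 1) * of_int (beta (y (qs ! (l - 1)))))"

lemma hat_start_bounds:
  assumes sorted: "sorted_wrt (<) qs" and range: "set qs \<subseteq> N" and l: "l \<le> length qs"
  shows "hat_start qs l \<le> n" and "hat_start qs l \<le> Suc (hat_end n qs l)"
proof -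
  show "hat_start qs l \<le> n"
  proof (cases "l = 0")
    case False
    then show ?thesis using nth_in_N[OF range, of "l - 1"] l by (simp add: hat_start_def)
  qed (simp add: hat_start_def)
  then show "hat_start qs l \<le> Suc (hat_end n qs l)"
    using sorted_wrt_nth_less[OF sorted, of "l - 1" l]
    by (cases "0 < l \<and> l < length qs") (auto simp: hat_start_def hat_end_def)
qed

lemma kij_phase_exp:
  assumes sorted: "sorted_wrt (<) qs" and range: "set qs \<subseteq> N"
    and rho: "\<forall>l \<le> length qs. rho_prefix (hat_end n qs l) = rho_prefix (hat_start qs l)"
    and l: "l \<le> length qs"
  shows "kij alpha beta k y (hat_start qs l) (hat_end n qs l) = phase_exp (\<lambda>t. phase (qs ! t)) qs l"
proof -
  let ?i = "hat_start qs l" and ?e = "hat_end n qs l"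
  note bounds = hat_start_bounds[OF sorted range l]
  have nonzero: "ratio_prod 0 ?i \<noteq> 0" using ratio_prod_nonzero bounds(1) by simp
  have start: "partial_sum ?i / ratio_prod 0 ?i =
      (if l = 0 then 0 else phase (qs ! (l - 1)) * of_int (beta (y (qs ! (l - 1)))))"
  proof (cases "l = 0")
    case False
    then have "qs ! (l - 1) \<in> N" using nth_in_N[OF range] l by simp
    then show ?thesis using False nonzero partial_sum_phase by (simp add: hat_start_def)
  qed (simp add: hat_start_def partial_sum_def)
  have "partial_sum (Suc ?e) / ratio_prod 0 ?i =
      (if l < length qs then phase (qs ! l) * of_int (alpha (y (qs ! l)))
       else partial_sum (Suc n) / ratio_prod 0 n)"
  proof (cases "l < length qs")
    case True
    let ?j = "qs ! l"
    have j: "?j \<in> N" "Suc ?e = ?j" using nth_in_N[OF range True] True by (auto simp: hat_end_def)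
    have "ratio_prod 0 ?j = ratio_prod 0 (?j - 1) * ratio (y ?j)"
      using ratio_prod_Suc[of 0 "?j - 1"] j by simp
    also have "ratio_prod 0 (?j - 1) = ratio_prod 0 ?i"
      by (rule ratio_prod_0_cong) (use rho[rule_format, OF l] j bounds(1) True in \<open>auto simp: hat_end_def\<close>)
    finally have "partial_sum ?j = phase ?j * ratio_prod 0 ?i * of_int (alpha (y ?j))"
      using partial_sum_phase[OF j(1)] ratio_mult_beta[OF y_in_E[OF j(1)]] by (simp add: algebra_simps)
    then show ?thesis using True j nonzero by simp
  next
    case False
    then have "ratio_prod 0 ?i = ratio_prod 0 n"
      by (intro ratio_prod_0_cong) (use rho[rule_format, OF l] bounds(1) in \<open>auto simp: hat_end_def\<close>)
    then show ?thesis using False by (simp add: hat_end_def)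
  qed
  moreover have "kij alpha beta k y ?i ?e = (partial_sum (Suc ?e) - partial_sum ?i) / ratio_prod 0 ?i"
    using kij_ratio_prod[OF bounds(2)] nonzero by (simp add: eq_divide_eq)
  ultimately show ?thesis unfolding phase_exp_def start[symmetric] by (simp add: diff_divide_distrib)
qed

lemma phase_exp_cong_edges:
  assumes "length qs = length qs'" "\<And>t. t < length qs \<Longrightarrow> y (qs ! t) = y (qs' ! t)" "l \<le> length qs"
  shows "phase_exp \<phi> qs l = phase_exp \<phi> qs' l"
  unfolding phase_exp_def using assms by (cases "l = 0") auto

lemma phase_exp_diff_Ints:
  assumes "\<And>t. t < length qs \<Longrightarrow> \<phi> t - \<psi> t \<in> \<int>" and "l \<le> length qs"
  shows "phase_exp \<phi> qs l - phase_exp \<psi> qs l \<in> \<int>"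
proof -
  have int: "(\<phi> t - \<psi> t) * of_int c \<in> \<int>" if "t < length qs" for t c
    using assms(1)[OF that] by (intro Ints_mult) auto
  have "phase_exp \<phi> qs l - phase_exp \<psi> qs l =
      (if l < length qs then (\<phi> l - \<psi> l) * of_int (alpha (y (qs ! l))) else 0) -
      (if l = 0 then 0 else (\<phi> (l - 1) - \<psi> (l - 1)) * of_int (beta (y (qs ! (l - 1)))))"
    unfolding phase_exp_def by (simp add: algebra_simps)
  also have "\<dots> \<in> \<int>"
    using int[of l] int[of "l - 1"] assms(2) by (auto intro: Ints_diff)
  finally show ?thesis .
qed

definition suffix_word :: "(nat \<Rightarrow> int) \<Rightarrow> nat list \<Rightarrow> nat \<Rightarrow> ('v, 'e) letter list" where
  "suffix_word e qs j =
     letters (concat (map (\<lambda>l. SE (y (qs ! l)) # pw (tau (y (qs ! l))) (e (Suc l))) [j..<length qs]))"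

lemma sub_word_split_at:
  assumes "j < length qs" and "0 \<notin> set qs"
  shows "letters (sub_word e qs) =
    letters (sub_word (e(j := 0)) (take j qs)) @ powl (vertex (hat_start qs j)) (e j) @ [ge (y (qs ! j))]
    @ powl (tau (y (qs ! j))) (e (Suc j)) @ suffix_word e qs (Suc j)"
proof -
  have upt: "[0..<length qs] = [0..<j] @ j # [Suc j..<length qs]"
    using upt_add_eq_append[of 0 j "length qs - j"] upt_conv_Cons[of j "length qs"] assms(1) by simp
  have edges: "map (\<lambda>l. (y (take j qs ! l), e (Suc l))) [0..<j] = map (\<lambda>l. (y (qs ! l), e (Suc l))) [0..<j]"
    by (rule map_cong) simp_all
  have "sub_word e qs = sub_word e (take j qs) @ SE (y (qs ! j)) # pw (tau (y (qs ! j))) (e (Suc j))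
      @ concat (map (\<lambda>l. SE (y (qs ! l)) # pw (tau (y (qs ! l))) (e (Suc l))) [Suc j..<length qs])"
    using assms(1) unfolding sub_word_def fact_word_def upt by (simp add: min_absorb2 edges comp_def)
  moreover have "0 \<notin> set (take j qs)" using assms(2) in_set_takeD by metis
  then have "letters (sub_word e (take j qs)) =
      letters (sub_word (e(j := 0)) (take j qs)) @ powl (vertex (hat_start qs j)) (e j)"
    using sub_word_last[of "take j qs" e] assms(1) by (simp add: min_absorb2 hat_start_def)
  ultimately show ?thesis by (simp add: suffix_word_def)
qed

lemma sub_word_slide:
  assumes j: "j < length qs" and "0 \<notin> set qs" and "y (qs ! j) \<in> E"
    and iota: "iota (y (qs ! j)) = vertex (hat_start qs j)"
    and same: "\<And>l. l \<le> length qs \<Longrightarrow> l \<noteq> j \<Longrightarrow> l \<noteq> Suc j \<Longrightarrow> e' l = e l"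
    and at_j: "e' j = e j + alpha (y (qs ! j)) * d"
    and at_Suc_j: "e' (Suc j) = e (Suc j) - beta (y (qs ! j)) * d"
  shows "FG (letters (sub_word e qs)) (letters (sub_word e' qs))"
proof -
  let ?z = "y (qs ! j)"
  let ?a = "iota ?z" and ?b = "tau ?z"
  have prefix: "sub_word (e'(j := 0)) (take j qs) = sub_word (e(j := 0)) (take j qs)"
    by (rule sub_word_cong) (use same j in auto)
  have suffix: "suffix_word e' qs (Suc j) = suffix_word e qs (Suc j)"
    unfolding suffix_word_def
    by (rule arg_cong[where f = "\<lambda>xs. letters (concat xs)"], rule map_cong) (use same in auto)
  have "FG (powl ?a (e' j) @ [ge ?z] @ powl ?b (e' (Suc j)))
      ((powl ?a (e j) @ powl ?a (alpha ?z * d)) @ [ge ?z] @ powl ?b (e' (Suc j)))"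
    using FG_context[OF FG_sym[OF FG_powl_add[of ?a "e j" "alpha ?z * d"]],
        of "[]" "[ge ?z] @ powl ?b (e' (Suc j))"]
      at_j by simp
  also have "FG \<dots> (powl ?a (e j) @ ([ge ?z] @ powl ?b (beta ?z * d)) @ powl ?b (e' (Suc j)))"
    using FG_context[OF FG_slide[OF assms(3), of d], of "powl ?a (e j)" "powl ?b (e' (Suc j))"] by simp
  also have "FG \<dots> (powl ?a (e j) @ [ge ?z] @ powl ?b (beta ?z * d + e' (Suc j)))"
    using FG_context[OF FG_powl_add[of ?b "beta ?z * d" "e' (Suc j)"], of "powl ?a (e j) @ [ge ?z]" "[]"] by simp
  also have "beta ?z * d + e' (Suc j) = e (Suc j)" using at_Suc_j by simp
  finally have "FG (powl ?a (e j) @ [ge ?z] @ powl ?b (e (Suc j)))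
      (powl ?a (e' j) @ [ge ?z] @ powl ?b (e' (Suc j)))"
    by (rule FG_sym)
  from FG_context[OF this, of "letters (sub_word (e(j := 0)) (take j qs))" "suffix_word e qs (Suc j)"]
  show ?thesis
    using sub_word_split_at[OF j \<open>0 \<notin> set qs\<close>, of e] sub_word_split_at[OF j \<open>0 \<notin> set qs\<close>, of e']
      prefix suffix iota by simp
qed

lemma phase_exp_fun_upd:
  assumes "j < length qs"
  shows "phase_exp (\<phi>(j := \<phi> j + d)) qs l = phase_exp \<phi> qs l
    + (if l = j then d * of_int (alpha (y (qs ! j))) else 0)
    - (if l = Suc j then d * of_int (beta (y (qs ! j))) else 0)"
  using assms unfolding phase_exp_def by (auto simp: algebra_simps)

text \<open>Shifting the phases by integers only conjugates vertex syllables across edges.\<close>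

lemma sub_word_phase_shift:
  assumes "0 \<notin> set qs" and range: "set qs \<subseteq> N"
    and iota: "\<And>t. t < length qs \<Longrightarrow> iota (y (qs ! t)) = vertex (hat_start qs t)"
    and diff: "\<And>t. t < length qs \<Longrightarrow> \<psi> t - \<phi> t \<in> \<int>"
  shows "FG (letters (sub_word (\<lambda>l. \<lfloor>phase_exp \<phi> qs l\<rfloor>) qs)) (letters (sub_word (\<lambda>l. \<lfloor>phase_exp \<psi> qs l\<rfloor>) qs))"
proof -
  define \<chi> where "\<chi> j t = (if t < j then \<psi> t else \<phi> t)" for j t
  have "FG (letters (sub_word (\<lambda>l. \<lfloor>phase_exp \<phi> qs l\<rfloor>) qs)) (letters (sub_word (\<lambda>l. \<lfloor>phase_exp (\<chi> j) qs l\<rfloor>) qs))"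
    if "j \<le> length qs" for j
    using that
  proof (induction j)
    case 0
    then show ?case by (simp add: \<chi>_def)
  next
    case (Suc j)
    then have j: "j < length qs" by simp
    obtain d where d: "\<psi> j - \<phi> j = of_int d" using diff[OF j] by (auto elim: Ints_cases)
    have upd: "\<chi> (Suc j) = (\<chi> j)(j := \<chi> j j + of_int d)"
      using d by (auto simp: \<chi>_def fun_eq_iff)
    let ?z = "y (qs ! j)"
    have at_j: "phase_exp (\<chi> (Suc j)) qs j = phase_exp (\<chi> j) qs j + of_int (alpha ?z * d)"
      and at_Suc_j: "phase_exp (\<chi> (Suc j)) qs (Suc j) = phase_exp (\<chi> j) qs (Suc j) - of_int (beta ?z * d)"
      and elsewhere: "\<And>l. l \<noteq> j \<Longrightarrow> l \<noteq> Suc j \<Longrightarrow> phase_exp (\<chi> (Suc j)) qs l = phase_exp (\<chi> j) qs l"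
      unfolding upd phase_exp_fun_upd[OF j] by (simp_all add: mult.commute)
    have floor_j: "\<lfloor>phase_exp (\<chi> (Suc j)) qs j\<rfloor> = \<lfloor>phase_exp (\<chi> j) qs j\<rfloor> + alpha ?z * d"
      unfolding at_j by (rule floor_add_int[symmetric])
    have floor_Suc_j: "\<lfloor>phase_exp (\<chi> (Suc j)) qs (Suc j)\<rfloor> = \<lfloor>phase_exp (\<chi> j) qs (Suc j)\<rfloor> - beta ?z * d"
      unfolding at_Suc_j by (rule floor_diff_of_int)
    have "FG (letters (sub_word (\<lambda>l. \<lfloor>phase_exp (\<chi> j) qs l\<rfloor>) qs))
        (letters (sub_word (\<lambda>l. \<lfloor>phase_exp (\<chi> (Suc j)) qs l\<rfloor>) qs))"
    proof (rule sub_word_slide[OF j \<open>0 \<notin> set qs\<close> y_in_E[OF nth_in_N[OF range j]] iota[OF j]])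
      fix l assume "l \<noteq> j" "l \<noteq> Suc j"
      then show "\<lfloor>phase_exp (\<chi> (Suc j)) qs l\<rfloor> = \<lfloor>phase_exp (\<chi> j) qs l\<rfloor>" by (metis elsewhere)
    qed (fact floor_j floor_Suc_j)+
    with Suc.IH[OF Suc_leD[OF Suc.prems]] show ?case by (rule FG_trans)
  qed
  moreover have "sub_word (\<lambda>l. \<lfloor>phase_exp (\<chi> (length qs)) qs l\<rfloor>) qs = sub_word (\<lambda>l. \<lfloor>phase_exp \<psi> qs l\<rfloor>) qs"
    by (rule sub_word_cong) (auto simp: phase_exp_def \<chi>_def)
  ultimately show ?thesis by (metis order_refl)
qed


lemma admissible_kij_phase_exp:
  "admissible n qs \<Longrightarrow> l \<le> length qs \<Longrightarrow>
    kij alpha beta k y (hat_start qs l) (hat_end n qs l) = phase_exp (\<lambda>t. phase (qs ! t)) qs l"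
  unfolding admissible_def closed_segment_def by (intro kij_phase_exp) auto

lemma admissible_transfer:
  assumes adm: "admissible n ps" and sorted: "sorted_wrt (<) qs" and range: "set qs \<subseteq> N"
    and len: "length qs = length ps" and alike: "\<And>t. t < length qs \<Longrightarrow> alike (qs ! t) (ps ! t)"
  shows "admissible n qs"
proof -
  have ps_range: "set ps \<subseteq> N" and segs: "\<And>l. l \<le> length ps \<Longrightarrow> closed_segment (hat_start ps l) (hat_end n ps l)"
    using adm unfolding admissible_def by auto
  have seg_start: "vertex (hat_start qs l) = vertex (hat_start ps l) \<and>
      rho_prefix (hat_start qs l) = rho_prefix (hat_start ps l)"
    if "l \<le> length qs" for l
  proof (cases "l = 0")
    case False
    then have "l - 1 < length qs" using that by simp
    then have "qs ! (l - 1) \<in> N" "ps ! (l - 1) \<in> N" "alike (qs ! (l - 1)) (ps ! (l - 1))"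
      using alike nth_in_N[OF range] nth_in_N[OF ps_range] len by auto
    then show ?thesis using False by (simp add: hat_start_def vertex_def alike_def)
  qed (simp add: hat_start_def)
  have seg_end: "vertex (hat_end n qs l) = vertex (hat_end n ps l) \<and>
      rho_prefix (hat_end n qs l) = rho_prefix (hat_end n ps l)"
    if "l \<le> length qs" for l
  proof (cases "l < length qs")
    case True
    have "qs ! l \<in> N" "ps ! l \<in> N" using nth_in_N[OF range True] nth_in_N[OF ps_range] len True by auto
    then show ?thesis
      using alike[OF True] iota_y[of "qs ! l", symmetric] iota_y[of "ps ! l", symmetric] True len
      by (simp add: hat_end_def alike_def)
  qed (use len in \<open>simp add: hat_end_def\<close>)
  have rho: "\<forall>l \<le> length qs. rho_prefix (hat_end n qs l) = rho_prefix (hat_start qs l)"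
    using seg_start seg_end segs len unfolding closed_segment_def by simp
  have "kij alpha beta k y (hat_start qs l) (hat_end n qs l) \<in> \<int>" if "l \<le> length qs" for l
  proof -
    have "phase_exp (\<lambda>t. phase (qs ! t)) qs l = phase_exp (\<lambda>t. phase (qs ! t)) ps l"
      using phase_exp_cong_edges[OF len] alike that unfolding alike_def by blast
    moreover have "phase_exp (\<lambda>t. phase (qs ! t)) ps l - phase_exp (\<lambda>t. phase (ps ! t)) ps l \<in> \<int>"
      using phase_exp_diff_Ints[of ps] alike len that unfolding alike_def by simp
    moreover have "phase_exp (\<lambda>t. phase (ps ! t)) ps l \<in> \<int>"
      using segs[of l] admissible_kij_phase_exp[OF adm, of l] len that unfolding closed_segment_def by simp
    ultimately show ?thesis
      using kij_phase_exp[OF sorted range rho that] by (metis Ints_add diff_add_cancel)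
  qed
  then show ?thesis
    using sorted range seg_start seg_end segs len unfolding admissible_def closed_segment_def by simp
qed

lemma admissible_iota:
  assumes "admissible n qs" and "t < length qs"
  shows "iota (y (qs ! t)) = vertex (hat_start qs t)"
proof -
  have "qs ! t \<in> N" "closed_segment (hat_start qs t) (hat_end n qs t)"
    using assms admissible_segment nth_in_N unfolding admissible_def by auto
  then show ?thesis using iota_y assms(2) by (simp add: closed_segment_def hat_end_def)
qed

lemma hat_word_transfer:
  assumes adm_ps: "admissible n ps" and adm_qs: "admissible n qs" and len: "length qs = length ps"
    and alike: "\<And>t. t < length qs \<Longrightarrow> alike (qs ! t) (ps ! t)"
  shows "FG (letters (hat_word ps n)) (letters (hat_word qs n))"
proof -
  have range: "set ps \<subseteq> N" using adm_ps unfolding admissible_def by simp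
  have edges: "y (qs ! t) = y (ps ! t)" if "t < length qs" for t
    using alike[OF that] unfolding alike_def by simp
  have "hat_word ps n = sub_word (\<lambda>l. \<lfloor>phase_exp (\<lambda>t. phase (ps ! t)) ps l\<rfloor>) ps"
    unfolding hat_word_def hat_exp_def by (rule sub_word_cong) (simp add: admissible_kij_phase_exp[OF adm_ps])
  moreover have "FG (letters (sub_word (\<lambda>l. \<lfloor>phase_exp (\<lambda>t. phase (ps ! t)) ps l\<rfloor>) ps))
      (letters (sub_word (\<lambda>l. \<lfloor>phase_exp (\<lambda>t. phase (qs ! t)) ps l\<rfloor>) ps))"
  proof (rule sub_word_phase_shift[OF _ range])
    show "0 \<notin> set ps" using range by auto
    show "iota (y (ps ! t)) = vertex (hat_start ps t)" if "t < length ps" for t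
      using admissible_iota[OF adm_ps that] .
    show "phase (qs ! t) - phase (ps ! t) \<in> \<int>" if "t < length ps" for t
      using alike that len unfolding alike_def by simp
  qed
  moreover have "sub_word (\<lambda>l. \<lfloor>phase_exp (\<lambda>t. phase (qs ! t)) ps l\<rfloor>) ps = hat_word qs n"
  proof -
    have "sub_word (\<lambda>l. \<lfloor>phase_exp (\<lambda>t. phase (qs ! t)) ps l\<rfloor>) ps =
        sub_word (\<lambda>l. \<lfloor>phase_exp (\<lambda>t. phase (qs ! t)) qs l\<rfloor>) qs"
      using len edges phase_exp_cong_edges[OF len edges]
      by (metis (no_types, lifting) sub_word_cong sub_word_cong_edges)
    also have "\<dots> = hat_word qs n"
      unfolding hat_word_def hat_exp_def by (rule sub_word_cong) (simp add: admissible_kij_phase_exp[OF adm_qs])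
    finally show ?thesis .
  qed
  ultimately show ?thesis by simp
qed

lemma admissible_is_factorization:
  assumes adm: "admissible n qs"
  shows "is_factorization V E iota tau a0 (map (\<lambda>l. (y (qs ! l), e (Suc l))) [0..<length qs])"
  unfolding is_factorization_def
proof (intro conjI ballI allI impI)
  have range: "set qs \<subseteq> N" using adm unfolding admissible_def by simp
  show "a0 \<in> V" by (rule a0_in_V)
  show "fst p \<in> E" if "p \<in> set (map (\<lambda>l. (y (qs ! l), e (Suc l))) [0..<length qs])" for p
    using that y_in_E nth_in_N[OF range] by auto
  show "iota (fst (map (\<lambda>l. (y (qs ! l), e (Suc l))) [0..<length qs] ! l)) =
      (if l = 0 then a0 else tau (fst (map (\<lambda>l. (y (qs ! l), e (Suc l))) [0..<length qs] ! (l - 1))))"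
    if "l < length (map (\<lambda>l. (y (qs ! l), e (Suc l))) [0..<length qs])" for l
  proof -
    have "l < length qs" using that by simp
    moreover have "qs ! (l - 1) \<in> N" using nth_in_N[OF range] \<open>l < length qs\<close> by simp
    ultimately show ?thesis using admissible_iota[OF adm] by (auto simp: hat_start_def vertex_def)
  qed
  assume "map (\<lambda>l. (y (qs ! l), e (Suc l))) [0..<length qs] \<noteq> []"
  then have "qs \<noteq> []" by simp
  moreover have "closed_segment (hat_start qs (length qs)) n"
    using admissible_segment[OF adm, of "length qs"] by (simp add: hat_end_def)
  moreover have "last qs \<in> N" using last_in_set[OF \<open>qs \<noteq> []\<close>] range by blast
  ultimately show "tau (fst (last (map (\<lambda>l. (y (qs ! l), e (Suc l))) [0..<length qs]))) = a0"
    using vertex_n by (simp add: last_map closed_segment_def hat_start_def vertex_def last_conv_nth)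
qed

lemma admissible_pinch_partner:
  assumes adm: "admissible n qs" and l: "Suc l < length qs"
    and y: "y (qs ! l) = bar (y (qs ! Suc l))" and exp: "hat_exp qs n (Suc l) = beta (y (qs ! l)) * m"
  shows "partner (qs ! l) (qs ! Suc l)"
proof -
  let ?i = "qs ! l" and ?j = "qs ! Suc l"
  have range: "set qs \<subseteq> N" and sorted: "sorted_wrt (<) qs" using adm unfolding admissible_def by auto
  then have N: "?i \<in> N" "?j \<in> N" and "?i < ?j"
    using l nth_in_N sorted_wrt_nth_less[OF sorted, of l "Suc l"] by auto
  have "closed_segment ?i (?j - 1)"
    using admissible_segment[OF adm, of "Suc l"] l by (simp add: hat_start_def hat_end_def)
  then have rho: "rho_prefix ?i = rho_prefix (?j - 1)"
    and "kij alpha beta k y ?i (?j - 1) = of_int (beta (y ?i) * m)"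
    using exp l unfolding closed_segment_def hat_exp_def
    by (auto simp: hat_start_def hat_end_def elim!: Ints_cases)
  then show ?thesis
    unfolding partner_def using kij_partner_iff[OF \<open>?i < ?j\<close> N y rho] rho_prefix_pred_eq[OF N y rho] y rho
    by blast
qed

text \<open>A pinch \<open>y\<^sub>i b\<^sup>\<beta>\<^sup>m bar y\<^sub>i\<close> inside the hat word would make consecutive chosen indices partners,
  i.e. put a letter next to its bar in the freely reduced word.\<close>

lemma admissible_britton_reduced:
  assumes adm: "admissible n qs" and red: "freely_reduced sb (map cl_letter qs)"
  shows "britton_reduced E iota tau bar alpha beta (hat_word qs n)"
  unfolding britton_reduced_def
proof
  assume "\<exists>ws'. (hat_word qs n, ws') \<in> britton_step E iota tau bar alpha beta"
  then consider (merge) u a k1 m v where "hat_word qs n = u @ [SP a k1, SP a m] @ v"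
    | (pinch) u e m v where "e \<in> E" "hat_word qs n = u @ [SE e] @ pw (tau e) (beta e * m) @ [SE (bar e)] @ v"
    unfolding britton_step_def by blast
  then show False
  proof cases
    case merge
    have "successively (\<lambda>x x'. \<not> (is_power x \<and> is_power x')) (hat_word qs n)"
      unfolding hat_word_eq by (rule fact_word_no_adjacent_powers)
    then show False using merge by (simp add: successively_append_iff)
  next
    case pinch
    then have "fact_word tau a0 (hat_exp qs n 0) (map (\<lambda>l. (y (qs ! l), hat_exp qs n (Suc l))) [0..<length qs])
        = u @ SE e # pw (tau e) (beta e * m) @ SE (bar e) # v"
      unfolding hat_word_eq by simp
    from fact_word_edge_pair[OF this]
    obtain l where l: "Suc l < length qs" and "y (qs ! l) = e" "y (qs ! Suc l) = bar e"
      and "hat_exp qs n (Suc l) = beta e * m"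
      by auto
    with \<open>e \<in> E\<close> have "partner (qs ! l) (qs ! Suc l)"
      using admissible_pinch_partner[OF adm l, of m] by (simp add: bar_bar)
    moreover have "qs ! l \<in> N" "qs ! Suc l \<in> N"
      using adm nth_in_N l unfolding admissible_def by auto
    ultimately have "map cl_letter qs ! Suc l = sb (map cl_letter qs ! l)"
      using sigma_bar_partner l by simp
    then show False using freely_reduced_nth[OF red] l by simp
  qed
qed

lemma reduced_stack_alike:
  assumes range: "set idx \<subseteq> N" and red: "freely_reduced sb (map cl_letter idx)"
    and eq: "free_eq sb (map cl_letter [1..<n+1]) (map cl_letter idx)"
  obtains ps where "admissible n ps" and "FG (prefix_word n) (letters (hat_word ps n))"
    and "length idx = length ps" and "\<And>t. t < length idx \<Longrightarrow> alike (idx ! t) (ps ! t)"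
proof
  let ?ps = "rev (stack n)"
  show adm: "admissible n ?ps" and "FG (prefix_word n) (letters (hat_word ?ps n))"
    using stack_state_stack[of n] unfolding stack_state_def by simp_all
  have letters: "map cl_letter idx = map cl_letter ?ps"
    using letters_stack[OF range red eq] by simp
  then show len: "length idx = length ?ps" by (metis length_map)
  fix t assume "t < length idx"
  moreover have "idx ! t \<in> N" "?ps ! t \<in> N"
    using nth_in_N[OF range \<open>t < length idx\<close>] nth_in_N[of ?ps t] adm len \<open>t < length idx\<close>
    unfolding admissible_def by auto
  ultimately show "alike (idx ! t) (?ps ! t)"
    using cls_eq_imp_alike arg_cong[OF letters, of "\<lambda>xs. xs ! t"] len by (simp add: cl_letter_def)
qed

end

theorem corollary3p9:
  fixes V :: "'v set" and E :: "'e set"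
    and iota tau :: "'e \<Rightarrow> 'v" and bar :: "'e \<Rightarrow> 'e"
    and alpha beta :: "'e \<Rightarrow> int" and D :: "'e set"
    and a0 :: 'v and n :: nat and k :: "nat \<Rightarrow> int" and y :: "nat \<Rightarrow> 'e"
    and idx :: "nat list"
  assumes G: "gbs_graph V E iota tau bar alpha beta"
    and D: "orientation E bar D"
    and w: "is_factorization V E iota tau a0 (map (\<lambda>i. (y i, k i)) [1..<n+1])"
    and idx_sorted: "sorted_wrt (<) idx"
    and idx_range: "set idx \<subseteq> {1..n}"
    and red: "freely_reduced (sigma_bar D bar alpha beta n k y)
                (map (\<lambda>i. (cls D bar alpha beta n k y i, False)) idx)"
    and eq: "free_eq (sigma_bar D bar alpha beta n k y)
                (map (\<lambda>i. (cls D bar alpha beta n k y i, False)) [1..<n+1])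
                (map (\<lambda>i. (cls D bar alpha beta n k y i, False)) idx)"
  shows "\<exists>K :: nat \<Rightarrow> int.
           (\<forall>l \<le> length idx. of_int (K l) = kij alpha beta k y (hat_start idx l) (hat_end n idx l)) \<and>
           is_factorization V E iota tau a0 (map (\<lambda>l. (y (idx ! l), K (Suc l))) [0..<length idx]) \<and>
           britton_reduced E iota tau bar alpha beta
             (fact_word tau a0 (K 0) (map (\<lambda>l. (y (idx ! l), K (Suc l))) [0..<length idx])) \<and>
           FG_eq E iota tau bar alpha beta
             (letters (fact_word tau a0 (k 0) (map (\<lambda>i. (y i, k i)) [1..<n+1])))
             (letters (fact_word tau a0 (K 0) (map (\<lambda>l. (y (idx ! l), K (Suc l))) [0..<length idx])))"
proof -
  interpret gbs_factorization V E iota tau bar alpha beta D a0 n k y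
    using G D w by (intro gbs_factorization.intro gbs.intro gbs_factorization_axioms.intro)
  have letter: "(\<lambda>i. (cls D bar alpha beta n k y i, False)) = cl_letter"
    by (simp add: fun_eq_iff cl_letter_def)
  obtain ps where ps: "admissible n ps" "FG (prefix_word n) (letters (hat_word ps n))"
    and len: "length idx = length ps" and alike: "\<And>t. t < length idx \<Longrightarrow> alike (idx ! t) (ps ! t)"
    using reduced_stack_alike idx_range red eq unfolding letter by blast
  have adm: "admissible n idx"
    by (rule admissible_transfer[OF ps(1) idx_sorted idx_range len alike])
  show ?thesis
  proof (intro exI conjI allI impI)
    show "of_int (hat_exp idx n l) = kij alpha beta k y (hat_start idx l) (hat_end n idx l)"
      if "l \<le> length idx" for l
      using admissible_hat_exp[OF adm that] .
    show "is_factorization V E iota tau a0 (map (\<lambda>l. (y (idx ! l), hat_exp idx n (Suc l))) [0..<length idx])"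
      by (rule admissible_is_factorization[OF adm])
    show "britton_reduced E iota tau bar alpha beta
        (fact_word tau a0 (hat_exp idx n 0) (map (\<lambda>l. (y (idx ! l), hat_exp idx n (Suc l))) [0..<length idx]))"
      using admissible_britton_reduced[OF adm] red unfolding letter hat_word_eq by simp
    show "FG (letters (fact_word tau a0 (k 0) (map (\<lambda>i. (y i, k i)) [1..<n+1])))
        (letters (fact_word tau a0 (hat_exp idx n 0)
          (map (\<lambda>l. (y (idx ! l), hat_exp idx n (Suc l))) [0..<length idx])))"
      using FG_trans[OF ps(2) hat_word_transfer[OF ps(1) adm len alike]]
      unfolding prefix_word_def hat_word_eq by simp
  qed
qed

end
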